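(* Consider the $2\times2\times M$ Ising model with nearest- and next-nearest-neighbour interactions described in the context (antiferromagnetic layered Ising model when $J_1,J_2<0$), with real $J_1,J_2$ and temperature $T>0$. Let $\lambda_{\max}$ be the largest real root of the characteristic equation of the $4\times4$ matrix $\tau$ and $\mu_{\max}$ the largest real root of the characteristic equation of the $3\times3$ matrix $\tau'$ (defined in the context). Then the free energy per site $f(T)=-k_BT\lim_{M\to\infty}\frac{1}{4M}\ln Z_M$ equals $-\frac{k_BT}{4}\ln\lambda_{\max}$, the internal energy per site $u=-T^2\partial_T[f/T]$ equals $k_BT^2\partial_T[\frac14\ln\lambda_{\max}]$, the heat capacity per site $C=\partial_Tu$ equals $2k_BT\partial_T[\frac14\ln\lambda_{\max}]+k_BT^2\partial_T^2[\frac14\ln\lambda_{\max}]$, and the non-percolation probability satisfies $\lim_{M\to\infty}\frac{\ln(Z'_M/Z_M)}{M}=\ln\frac{\mu_{\max}}{\lambda_{\max}}$.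
   Context: Sites $t_i^m$, $i\in\{0,1,2,3\}$ (indices mod 4), $m\in\{0,\dots,M-1\}$, cyclically closed in $m$, spins $\sigma_i^m\in\{-1,1\}$. The cube energy is $$\mathcal H^m=-\sum_{r=0}^3\Big(J_1\big[\tfrac12\sigma_r^m\sigma_{r+1}^m+\tfrac12\sigma_r^{m+1}\sigma_{r+1}^{m+1}+\sigma_r^m\sigma_r^{m+1}\big]+J_2\big[\tfrac14\sigma_r^m\sigma_{r+2}^m+\tfrac14\sigma_r^{m+1}\sigma_{r+2}^{m+1}+\sigma_r^m\sigma_{r+1}^{m+1}+\sigma_r^m\sigma_{r-1}^{m+1}\big]\Big),$$ $\mathcal H=\sum_m\mathcal H^m$, $Z_M=\sum_\sigma e^{-\mathcal H/(k_BT)}$ over all $\sigma\in\{-1,1\}^{4M}$; $Z'_M$ is the same sum restricted to configurations with no $m,r$ such that $\sigma_r^m=\sigma_{r+1}^m=-1$. Transfer matrices: index a layer state $(s_0,\dots,s_3)$ by $k=1+\sum_i2^i(1-s_i)/2$; $\theta_{k,l}=\exp(-\mathcal H^m/(k_BT))$ with layer $m$ in state $k$, layer $m+1$ in state $l$. $\tau_{i,j}=\sum_{l\in G_j}\theta_{r_i,l}$, $(r_i)=(1,2,4,6)$, $G_1=\{1,16\}$, $G_2=\{2,3,5,8,9,12,14,15\}$, $G_3=\{4,7,10,13\}$, $G_4=\{6,11\}$; $\tau'_{i,j}=\sum_{l\in G'_j}\theta_{r'_i,l}$, $(r'_i)=(1,2,6)$, $G'_1=\{1\}$, $G'_2=\{2,3,5,9\}$,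 $G'_3=\{6,11\}$. *)

theory Defs
  imports "HOL-Analysis.Analysis" "Jordan_Normal_Form.Char_Poly"
begin

text \<open>A layer state is a function r \<mapsto> spin (indices taken mod 4).
  Energy of the cube between layer a (layer m) and layer b (layer m+1).\<close>

definition Hpair :: "real \<Rightarrow> real \<Rightarrow> (nat \<Rightarrow> real) \<Rightarrow> (nat \<Rightarrow> real) \<Rightarrow> real" where
  "Hpair J1 J2 a b = - (\<Sum>r<4.
      J1 * ( (1/2) * a (r mod 4) * a ((r+1) mod 4)
           + (1/2) * b (r mod 4) * b ((r+1) mod 4)
           + a (r mod 4) * b (r mod 4))
    + J2 * ( (1/4) * a (r mod 4) * a ((r+2) mod 4)
           + (1/4) * b (r mod 4) * b ((r+2) mod 4)
           + a (r mod 4) * b ((r+1) mod 4)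
           + a (r mod 4) * b ((r+3) mod 4)))"

definition configs :: "nat \<Rightarrow> (nat \<Rightarrow> nat \<Rightarrow> real) set" where
  "configs M = {..<M} \<rightarrow>\<^sub>E ({..<4} \<rightarrow>\<^sub>E {-1, 1})"

definition layer :: "nat \<Rightarrow> (nat \<Rightarrow> nat \<Rightarrow> real) \<Rightarrow> nat \<Rightarrow> nat \<Rightarrow> real" where
  "layer M \<sigma> m = (\<lambda>r. \<sigma> (m mod M) (r mod 4))"

definition Htot :: "real \<Rightarrow> real \<Rightarrow> nat \<Rightarrow> (nat \<Rightarrow> nat \<Rightarrow> real) \<Rightarrow> real" where
  "Htot J1 J2 M \<sigma> = (\<Sum>m<M. Hpair J1 J2 (layer M \<sigma> m) (layer M \<sigma> (m+1)))"

definition Zpart :: "real \<Rightarrow> real \<Rightarrow> real \<Rightarrow> nat \<Rightarrow> real \<Rightarrow> real" where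
  "Zpart kB J1 J2 M T = (\<Sum>\<sigma>\<in>configs M. exp (- Htot J1 J2 M \<sigma> / (kB * T)))"

definition nonperc :: "nat \<Rightarrow> (nat \<Rightarrow> nat \<Rightarrow> real) \<Rightarrow> bool" where
  "nonperc M \<sigma> = (\<forall>m<M. \<forall>r<4. \<not> (layer M \<sigma> m r = -1 \<and> layer M \<sigma> m (r+1) = -1))"

definition Zpart' :: "real \<Rightarrow> real \<Rightarrow> real \<Rightarrow> nat \<Rightarrow> real \<Rightarrow> real" where
  "Zpart' kB J1 J2 M T = (\<Sum>\<sigma>\<in>{\<sigma>\<in>configs M. nonperc M \<sigma>}. exp (- Htot J1 J2 M \<sigma> / (kB * T)))"

text \<open>Layer state with index k (1..16): k = 1 + sum_i 2^i (1 - s_i)/2.\<close>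
definition state :: "nat \<Rightarrow> nat \<Rightarrow> real" where
  "state k = (\<lambda>i. 1 - 2 * real (((k - 1) div 2 ^ (i mod 4)) mod 2))"

definition theta :: "real \<Rightarrow> real \<Rightarrow> real \<Rightarrow> real \<Rightarrow> nat \<Rightarrow> nat \<Rightarrow> real" where
  "theta kB J1 J2 T k l = exp (- Hpair J1 J2 (state k) (state l) / (kB * T))"

definition rows_tau :: "nat list" where "rows_tau = [1, 2, 4, 6]"
definition groups_tau :: "nat set list" where
  "groups_tau = [{1,16}, {2,3,5,8,9,12,14,15}, {4,7,10,13}, {6,11}]"
definition rows_tau' :: "nat list" where "rows_tau' = [1, 2, 6]"
definition groups_tau' :: "nat set list" where
  "groups_tau' = [{1}, {2,3,5,9}, {6,11}]"

text \<open>tau and tau' as matrices (0-based indices i,j correspond to 1-based i+1,j+1).\<close>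
definition tau :: "real \<Rightarrow> real \<Rightarrow> real \<Rightarrow> real \<Rightarrow> real mat" where
  "tau kB J1 J2 T = mat 4 4 (\<lambda>(i,j). \<Sum>l\<in>groups_tau ! j. theta kB J1 J2 T (rows_tau ! i) l)"

definition tau' :: "real \<Rightarrow> real \<Rightarrow> real \<Rightarrow> real \<Rightarrow> real mat" where
  "tau' kB J1 J2 T = mat 3 3 (\<lambda>(i,j). \<Sum>l\<in>groups_tau' ! j. theta kB J1 J2 T (rows_tau' ! i) l)"

definition max_real_root :: "real mat \<Rightarrow> real" where
  "max_real_root A = Max {x. poly (char_poly A) x = 0}"

definition lam_max :: "real \<Rightarrow> real \<Rightarrow> real \<Rightarrow> real \<Rightarrow> real" where
  "lam_max kB J1 J2 T = max_real_root (tau kB J1 J2 T)"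

definition mu_max :: "real \<Rightarrow> real \<Rightarrow> real \<Rightarrow> real \<Rightarrow> real" where
  "mu_max kB J1 J2 T = max_real_root (tau' kB J1 J2 T)"

definition free_energy :: "real \<Rightarrow> real \<Rightarrow> real \<Rightarrow> real \<Rightarrow> real" where
  "free_energy kB J1 J2 T = - kB * T * lim (\<lambda>M. ln (Zpart kB J1 J2 M T) / (4 * real M))"

definition internal_energy :: "real \<Rightarrow> real \<Rightarrow> real \<Rightarrow> real \<Rightarrow> real" where
  "internal_energy kB J1 J2 T = - T\<^sup>2 * deriv (\<lambda>t. free_energy kB J1 J2 t / t) T"

definition heat_capacity :: "real \<Rightarrow> real \<Rightarrow> real \<Rightarrow> real \<Rightarrow> real" where
  "heat_capacity kB J1 J2 T = deriv (internal_energy kB J1 J2) T"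

end

theory Submission
  imports Defs
begin

(*
  Z_M is the trace of the M-th power of the 16 x 16 transfer matrix theta, so with a positive
  eigenvector of theta its growth rate is the Perron root of theta.  The groups G_j form an
  equitable partition of the layer states: every state of a group has the same multiset of bond
  energies towards each group.  Hence a positive eigenvector of tau lifts to one of theta, and
  Z_M grows like lam_max ^ M; likewise Z'_M grows like mu_max ^ M, with tau'.

  The Perron root of a positive matrix exists by Brouwer's fixed point theorem, is its largest
  real eigenvalue by the Collatz-Wielandt bounds, depends continuously on the entries and is a
  simple root of the characteristic polynomial.  Since the entries of tau are smooth in T,
  implicit differentiation makes lam_max twice differentiable, which yields the formulas for the
  internal energy and the heat capacity.
*)

section \<open>Perron roots of positive matrices\<close>

lemma standard_simplex_compact_convex:
  defines "S \<equiv> {x::real^'n. (\<forall>i. 0 \<le> x$i) \<and> (\<Sum>i\<in>UNIV. x$i) = 1}"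
  shows "compact S" "convex S" "S \<noteq> {}"
proof -
  have "x$i \<le> 1" if "x \<in> S" for x :: "real^'n" and i
  proof -
    have "x$i \<le> (\<Sum>i\<in>UNIV. x$i)" using that by (intro member_le_sum) (auto simp: S_def)
    then show ?thesis using that by (simp add: S_def)
  qed
  then have "S \<subseteq> cbox 0 (\<chi> i. 1)" by (auto simp: S_def mem_box_cart)
  moreover have "closed S" unfolding S_def
    by (intro closed_Collect_conj closed_Collect_all closed_Collect_le closed_Collect_eq continuous_intros)
  ultimately show "compact S" by (metis bounded_cbox bounded_subset compact_eq_bounded_closed)
  show "convex S" unfolding convex_def S_def
    by (auto simp: sum.distrib simp flip: sum_distrib_left)
  have "(\<chi> i. 1 / real CARD('n)) \<in> S" by (simp add: S_def)
  then show "S \<noteq> {}" by blast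
qed

lemma positive_matrix_has_positive_eigenvector:
  fixes A :: "'n::finite \<Rightarrow> 'n \<Rightarrow> real"
  assumes pos: "\<And>i j. A i j > 0"
  shows "\<exists>r>0. \<exists>w. (\<forall>i. w i > 0) \<and> (\<forall>i. (\<Sum>j\<in>UNIV. A i j * w j) = r * w i)"
proof -
  define S where "S = {x::real^'n. (\<forall>i. 0 \<le> x$i) \<and> (\<Sum>i\<in>UNIV. x$i) = 1}"
  have simplex: "compact S" "convex S" "S \<noteq> {}"
    unfolding S_def by (rule standard_simplex_compact_convex)+
  define N where "N x i = (\<Sum>j\<in>UNIV. A i j * x$j)" for x :: "real^'n" and i
  define D where "D x = (\<Sum>i\<in>UNIV. N x i)" for x
  have N_pos: "N x i > 0" if x: "x \<in> S" for x i
  proof -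
    have "(\<Sum>i\<in>UNIV. x$i) = 1" using x by (simp add: S_def)
    then obtain j where "x$j \<noteq> 0" by (metis (no_types, lifting) sum.neutral zero_neq_one)
    then have "0 < A i j * x$j" using x pos by (simp add: S_def order_less_le)
    also have "\<dots> \<le> N x i" unfolding N_def
      by (rule member_le_sum) (use x pos in \<open>auto simp: S_def less_imp_le\<close>)
    finally show ?thesis .
  qed
  have D_pos: "D x > 0" if "x \<in> S" for x
    unfolding D_def using N_pos[OF that] by (simp add: sum_pos)
  \<comment> \<open>a fixed point of the normalised map \<open>x \<mapsto> A x / \<parallel>A x\<parallel>\<^sub>1\<close> is a positive eigenvector\<close>
  define f where "f x = (\<chi> i. N x i / D x)" for x
  have cont: "continuous_on S f"
    unfolding f_def N_def D_def
    by (intro continuous_intros) (use D_pos in \<open>fastforce simp: D_def N_def\<close>)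
  have maps: "f \<in> S \<rightarrow> S"
  proof
    fix x assume x: "x \<in> S"
    have "(\<Sum>i\<in>UNIV. f x $ i) = 1"
      using D_pos[OF x] by (simp add: f_def D_def flip: sum_divide_distrib)
    then show "f x \<in> S" using N_pos[OF x] D_pos[OF x] by (auto simp: S_def f_def less_imp_le)
  qed
  obtain x where x: "x \<in> S" "f x = x"
    by (rule brouwer[OF simplex cont maps])
  have "N x i = D x * x$i" for i
    using D_pos[OF x(1)] arg_cong[OF x(2), of "\<lambda>y. y$i"] by (simp add: f_def field_simps)
  moreover have "x$i > 0" for i
  proof -
    have "x$i = N x i / D x" using arg_cong[OF x(2), of "\<lambda>y. y$i"] by (simp add: f_def)
    then show ?thesis using N_pos[OF x(1), of i] D_pos[OF x(1)] by simp
  qed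
  ultimately show ?thesis using D_pos[OF x(1)] by (auto simp: N_def)
qed

lemma positive_mat_has_positive_eigenvector:
  fixes A :: "real mat"
  assumes card: "CARD('n::finite) = n"
    and pos: "\<And>i j. i < n \<Longrightarrow> j < n \<Longrightarrow> A $$ (i, j) > 0"
  shows "\<exists>r>0. \<exists>w. (\<forall>i<n. w i > 0) \<and> (\<forall>i<n. (\<Sum>j<n. A $$ (i, j) * w j) = r * w i)"
proof -
  obtain h :: "'n \<Rightarrow> nat" where h: "bij_betw h UNIV {..<n}"
    using ex_bij_betw_finite_nat[of "UNIV::'n set"] card by (auto simp: atLeast0LessThan)
  define g where "g = inv_into UNIV h"
  have h_lt: "h i < n" for i using h by (auto simp: bij_betw_def)
  have hg: "h (g k) = k" if "k < n" for k
    using h that unfolding g_def by (simp add: bij_betw_inv_into_right)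
  obtain r w where r: "r > 0" and w: "\<And>i. w i > 0"
    and eig: "\<And>i. (\<Sum>j\<in>UNIV. A $$ (h i, h j) * w j) = r * w i"
    using positive_matrix_has_positive_eigenvector[of "\<lambda>i j. A $$ (h i, h j)"] pos h_lt by blast
  have eig_g: "(\<Sum>j<n. A $$ (i, j) * w (g j)) = r * w (g i)" if i: "i < n" for i
  proof -
    have "(\<Sum>j<n. A $$ (i, j) * w (g j)) = (\<Sum>j\<in>UNIV. A $$ (i, h j) * w (g (h j)))"
      by (rule sum.reindex_bij_betw[OF h, symmetric])
    also have "\<dots> = (\<Sum>j\<in>UNIV. A $$ (h (g i), h j) * w j)"
      using h hg[OF i] by (simp add: g_def bij_betw_def)
    finally show ?thesis using eig by simp
  qed
  show ?thesis by (intro exI[of _ r] conjI exI[of _ "\<lambda>i. w (g i)"]) (use r w eig_g in auto)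
qed

text \<open>Collatz--Wielandt bounds: comparing an eigenvector \<open>u\<close> with a positive vector \<open>w\<close> at an
  index where \<open>\<bar>u i\<bar> / w i\<close> is extremal.\<close>

lemma exists_abs_eigenvalue_le_row_ratio:
  fixes A :: "real mat"
  assumes nonneg: "\<And>i j. i < n \<Longrightarrow> j < n \<Longrightarrow> A $$ (i, j) \<ge> 0"
    and w_pos: "\<And>i. i < n \<Longrightarrow> w i > 0"
    and eig: "\<And>i. i < n \<Longrightarrow> (\<Sum>j<n. A $$ (i, j) * u j) = x * u i"
    and nonzero: "\<exists>i<n. u i \<noteq> 0"
  shows "\<exists>i<n. \<bar>x\<bar> * w i \<le> (\<Sum>j<n. A $$ (i, j) * w j)"
proof -
  define m where "m = Max ((\<lambda>i. \<bar>u i\<bar> / w i) ` {..<n})"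
  have "m \<in> (\<lambda>i. \<bar>u i\<bar> / w i) ` {..<n}" unfolding m_def using nonzero by (intro Max_in) auto
  then obtain i where i: "i < n" "m = \<bar>u i\<bar> / w i" by blast
  have u_le: "\<bar>u j\<bar> \<le> m * w j" if "j < n" for j
    using Max_ge[of "(\<lambda>i. \<bar>u i\<bar> / w i) ` {..<n}" "\<bar>u j\<bar> / w j"] w_pos[OF that] that
    unfolding m_def by (simp add: divide_le_eq)
  obtain k where k: "k < n" "u k \<noteq> 0" using nonzero by blast
  have "0 < \<bar>u k\<bar>" using k(2) by simp
  then have "0 < m * w k" using u_le[OF k(1)] by linarith
  then have "m > 0" using w_pos[OF k(1)] by (simp add: zero_less_mult_iff)
  have "m * (\<bar>x\<bar> * w i) = \<bar>x\<bar> * \<bar>u i\<bar>" using i w_pos[OF i(1)] by simp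
  also have "\<dots> = \<bar>\<Sum>j<n. A $$ (i, j) * u j\<bar>" using eig[OF i(1)] by (simp add: abs_mult)
  also have "\<dots> \<le> (\<Sum>j<n. A $$ (i, j) * (m * w j))"
    by (rule order_trans[OF sum_abs sum_mono]) (use nonneg i(1) u_le in \<open>auto simp: abs_mult intro: mult_left_mono\<close>)
  also have "\<dots> = m * (\<Sum>j<n. A $$ (i, j) * w j)" by (simp add: sum_distrib_left algebra_simps)
  finally show ?thesis using i(1) \<open>m > 0\<close> by auto
qed

lemma exists_row_ratio_le_positive_eigenvalue:
  fixes A :: "real mat"
  assumes nonneg: "\<And>i j. i < n \<Longrightarrow> j < n \<Longrightarrow> A $$ (i, j) \<ge> 0"
    and w_pos: "\<And>i. i < n \<Longrightarrow> w i > 0"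
    and u_pos: "\<And>i. i < n \<Longrightarrow> u i > 0"
    and eig: "\<And>i. i < n \<Longrightarrow> (\<Sum>j<n. A $$ (i, j) * u j) = x * u i"
    and "n > 0"
  shows "\<exists>i<n. (\<Sum>j<n. A $$ (i, j) * w j) \<le> x * w i"
proof -
  define m where "m = Min ((\<lambda>i. u i / w i) ` {..<n})"
  have "m \<in> (\<lambda>i. u i / w i) ` {..<n}" unfolding m_def using \<open>n > 0\<close> by (intro Min_in) auto
  then obtain i where i: "i < n" "m = u i / w i" by blast
  have le_u: "m * w j \<le> u j" if "j < n" for j
    using Min_le[of "(\<lambda>i. u i / w i) ` {..<n}" "u j / w j"] w_pos[OF that] that
    unfolding m_def by (simp add: le_divide_eq)
  have "m > 0" using i u_pos w_pos by simp
  have "m * (\<Sum>j<n. A $$ (i, j) * w j) = (\<Sum>j<n. A $$ (i, j) * (m * w j))"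
    by (simp add: sum_distrib_left algebra_simps)
  also have "\<dots> \<le> (\<Sum>j<n. A $$ (i, j) * u j)"
    by (rule sum_mono) (use nonneg i(1) le_u in \<open>auto intro: mult_left_mono\<close>)
  also have "\<dots> = m * (x * w i)" using eig[OF i(1)] i w_pos[OF i(1)] by simp
  finally show ?thesis using i(1) \<open>m > 0\<close> by auto
qed

lemma abs_eigenvalue_le:
  fixes A :: "real mat"
  assumes "\<And>i j. i < n \<Longrightarrow> j < n \<Longrightarrow> A $$ (i, j) \<ge> 0"
    and w_pos: "\<And>i. i < n \<Longrightarrow> w i > 0"
    and super: "\<And>i. i < n \<Longrightarrow> (\<Sum>j<n. A $$ (i, j) * w j) \<le> c * w i"
    and "\<And>i. i < n \<Longrightarrow> (\<Sum>j<n. A $$ (i, j) * u j) = x * u i"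
    and "\<exists>i<n. u i \<noteq> 0"
  shows "\<bar>x\<bar> \<le> c"
proof -
  have "\<exists>i<n. \<bar>x\<bar> * w i \<le> (\<Sum>j<n. A $$ (i, j) * w j)"
    by (rule exists_abs_eigenvalue_le_row_ratio[where A=A and w=w and u=u]) (use assms in auto)
  then obtain i where i: "i < n" "\<bar>x\<bar> * w i \<le> (\<Sum>j<n. A $$ (i, j) * w j)" by blast
  then have "\<bar>x\<bar> * w i \<le> c * w i" using super[OF i(1)] by linarith
  then show ?thesis using w_pos[OF i(1)] by simp
qed

lemma abs_eigenvalue_less:
  fixes A :: "real mat"
  assumes "\<And>i j. i < n \<Longrightarrow> j < n \<Longrightarrow> A $$ (i, j) \<ge> 0"
    and w_pos: "\<And>i. i < n \<Longrightarrow> w i > 0"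
    and super: "\<And>i. i < n \<Longrightarrow> (\<Sum>j<n. A $$ (i, j) * w j) < c * w i"
    and "\<And>i. i < n \<Longrightarrow> (\<Sum>j<n. A $$ (i, j) * u j) = x * u i"
    and "\<exists>i<n. u i \<noteq> 0"
  shows "\<bar>x\<bar> < c"
proof -
  have "\<exists>i<n. \<bar>x\<bar> * w i \<le> (\<Sum>j<n. A $$ (i, j) * w j)"
    by (rule exists_abs_eigenvalue_le_row_ratio[where A=A and w=w and u=u]) (use assms in auto)
  then obtain i where i: "i < n" "\<bar>x\<bar> * w i \<le> (\<Sum>j<n. A $$ (i, j) * w j)" by blast
  then have "\<bar>x\<bar> * w i < c * w i" using super[OF i(1)] by linarith
  then show ?thesis using w_pos[OF i(1)] by simp
qed

lemma mult_mat_vec_vec_nth: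
  assumes "A \<in> carrier_mat n n" "i < n"
  shows "(A *\<^sub>v vec n w) $ i = (\<Sum>j<n. A $$ (i, j) * w j)"
  using assms by (simp add: scalar_prod_def atLeast0LessThan)

lemma eigenvalue_of_positive_eigenvector:
  fixes A :: "real mat"
  assumes A: "A \<in> carrier_mat n n" and "n > 0"
    and w_pos: "\<And>i. i < n \<Longrightarrow> w i > 0"
    and eig: "\<And>i. i < n \<Longrightarrow> (\<Sum>j<n. A $$ (i, j) * w j) = r * w i"
  shows "eigenvalue A r"
  unfolding eigenvalue_def eigenvector_def
proof (intro exI conjI)
  show "vec n w \<in> carrier_vec (dim_row A)" using A by simp
  have "vec n w $ 0 \<noteq> 0\<^sub>v n $ 0" using w_pos[OF \<open>n > 0\<close>] \<open>n > 0\<close> by simp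
  then show "vec n w \<noteq> 0\<^sub>v (dim_row A)" using A by auto
  show "A *\<^sub>v vec n w = r \<cdot>\<^sub>v vec n w"
    by (rule eq_vecI) (use A eig mult_mat_vec_vec_nth[OF A] in auto)
qed

lemma eigenvalue_imp_eigenvector_sums:
  fixes A :: "real mat"
  assumes A: "A \<in> carrier_mat n n" and "eigenvalue A x"
  shows "\<exists>u. (\<exists>i<n. u i \<noteq> 0) \<and> (\<forall>i<n. (\<Sum>j<n. A $$ (i, j) * u j) = x * u i)"
proof -
  obtain v where v: "v \<in> carrier_vec n" "v \<noteq> 0\<^sub>v n" "A *\<^sub>v v = x \<cdot>\<^sub>v v"
    using assms unfolding eigenvalue_def eigenvector_def by auto
  have "\<exists>i<n. v $ i \<noteq> 0"
    using v(1,2) by (metis carrier_vecD eq_vecI index_zero_vec(1,2))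
  moreover have "(\<Sum>j<n. A $$ (i, j) * v $ j) = x * v $ i" if "i < n" for i
  proof -
    have "(A *\<^sub>v v) $ i = (x \<cdot>\<^sub>v v) $ i" using v(3) by simp
    then show ?thesis using that A v(1) by (simp add: scalar_prod_def atLeast0LessThan)
  qed
  ultimately show ?thesis by blast
qed

lemma max_real_root_eq_perron_root:
  fixes A :: "real mat"
  assumes A: "A \<in> carrier_mat n n" and "n > 0"
    and nonneg: "\<And>i j. i < n \<Longrightarrow> j < n \<Longrightarrow> A $$ (i, j) \<ge> 0"
    and w_pos: "\<And>i. i < n \<Longrightarrow> w i > 0"
    and eig: "\<And>i. i < n \<Longrightarrow> (\<Sum>j<n. A $$ (i, j) * w j) = r * w i"
  shows "max_real_root A = r"
proof -
  have "char_poly A \<noteq> 0" using degree_monic_char_poly[OF A] by auto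
  then have "finite {x. poly (char_poly A) x = 0}" by (rule poly_roots_finite)
  moreover have "poly (char_poly A) r = 0"
    using eigenvalue_of_positive_eigenvector[OF A \<open>n > 0\<close> w_pos eig] eigenvalue_root_char_poly[OF A] by simp
  moreover have "x \<le> r" if "poly (char_poly A) x = 0" for x
  proof -
    have "eigenvalue A x" using that eigenvalue_root_char_poly[OF A] by simp
    then obtain u where u_nz: "\<exists>i<n. u i \<noteq> 0"
      and u_eig: "\<forall>i<n. (\<Sum>j<n. A $$ (i, j) * u j) = x * u i"
      using eigenvalue_imp_eigenvector_sums[OF A] by blast
    have "\<bar>x\<bar> \<le> r"
      by (rule abs_eigenvalue_le[where A=A and w=w and c=r and u=u])
        (use nonneg w_pos eig u_eig u_nz in auto)
    then show ?thesis by simp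
  qed
  ultimately show ?thesis unfolding max_real_root_def by (intro Max_eqI) auto
qed

lemma poly_pos_above_roots:
  fixes p :: "real poly"
  assumes "lead_coeff p > 0" and roots: "\<And>x. poly p x = 0 \<Longrightarrow> x < r"
  shows "poly p r > 0"
proof (rule ccontr)
  assume not_pos: "\<not> poly p r > 0"
  obtain N where N: "\<And>x. x \<ge> N \<Longrightarrow> poly p x \<ge> lead_coeff p"
    using poly_pinfty_gt_lc[OF assms(1)] by blast
  define y where "y = max N (r + 1)"
  have "r < y" "poly p y > 0" using N[of y] assms(1) by (auto simp: y_def)
  have "\<exists>z\<ge>r. poly p z = 0"
  proof (cases "poly p r = 0")
    case False
    then show ?thesis
      using poly_IVT_pos[OF \<open>r < y\<close> _ \<open>poly p y > 0\<close>] not_pos by (auto intro: less_imp_le)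
  qed auto
  then show False using roots by force
qed

text \<open>Deleting a row and the corresponding column of a positive matrix strictly lowers all row
  sums against the Perron vector \<open>w\<close>, so every eigenvalue of a principal minor is smaller
  than the Perron root in absolute value.\<close>

lemma char_poly_principal_minor_pos:
  fixes A :: "real mat"
  assumes A: "A \<in> carrier_mat n n" and i: "i < n"
    and pos: "\<And>i j. i < n \<Longrightarrow> j < n \<Longrightarrow> A $$ (i, j) > 0"
    and w_pos: "\<And>i. i < n \<Longrightarrow> w i > 0"
    and eig: "\<And>i. i < n \<Longrightarrow> (\<Sum>j<n. A $$ (i, j) * w j) = r * w i"
  shows "poly (char_poly (mat_delete A i i)) r > 0"
proof -
  obtain m where nm: "n = Suc m" using i by (cases n) auto
  define B where "B = mat_delete A i i"
  define ins where "ins = insert_index i"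
  have B: "B \<in> carrier_mat m m" unfolding B_def using mat_delete_carrier[OF A] nm by simp
  have B_ins: "B $$ (k, l) = A $$ (ins k, ins l)" if "k < m" "l < m" for k l
    unfolding B_def ins_def using mat_delete_index[of A m i i k l] A nm i that by simp
  have ins_lt: "ins k < n" if "k < m" for k
    using that nm by (simp add: ins_def insert_index_def)
  have sum_ins: "(\<Sum>l<m. f (ins l)) = (\<Sum>l\<in>{..<n} - {i}. f l)" for f :: "nat \<Rightarrow> real"
    using sum.reindex[OF insert_index_inj_on[of i "{..<m}"], of f] insert_index_image[of i m] i nm
    by (simp add: ins_def atLeast0LessThan)
  have row_sums_less: "(\<Sum>l<m. B $$ (k, l) * w (ins l)) < r * w (ins k)" if k: "k < m" for k
  proof -
    have "(\<Sum>l<m. B $$ (k, l) * w (ins l)) = (\<Sum>l\<in>{..<n} - {i}. A $$ (ins k, l) * w l)"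
      using B_ins k sum_ins[of "\<lambda>l. A $$ (ins k, l) * w l"] by simp
    also have "\<dots> < (\<Sum>l<n. A $$ (ins k, l) * w l)"
      using i pos[OF ins_lt[OF k] i] w_pos[OF i] by (simp add: sum_diff1)
    finally show ?thesis using eig[OF ins_lt[OF k]] by simp
  qed
  have "x < r" if "poly (char_poly B) x = 0" for x
  proof -
    have "eigenvalue B x" using that eigenvalue_root_char_poly[OF B] by simp
    then obtain u where u_nz: "\<exists>i<m. u i \<noteq> 0"
      and u_eig: "\<forall>i<m. (\<Sum>j<m. B $$ (i, j) * u j) = x * u i"
      using eigenvalue_imp_eigenvector_sums[OF B] by blast
    have "\<bar>x\<bar> < r"
      by (rule abs_eigenvalue_less[where A=B and w="\<lambda>k. w (ins k)" and c=r and u=u])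
        (use row_sums_less B_ins ins_lt pos w_pos u_eig u_nz in \<open>auto intro: less_imp_le\<close>)
    then show ?thesis by simp
  qed
  moreover have "lead_coeff (char_poly B) = 1" using degree_monic_char_poly[OF B] by simp
  ultimately show ?thesis using poly_pos_above_roots unfolding B_def by simp
qed

lemma poly_pderiv_char_poly_perron_root_pos:
  fixes A :: "real mat"
  assumes A: "A \<in> carrier_mat n n" and "n > 0"
    and pos: "\<And>i j. i < n \<Longrightarrow> j < n \<Longrightarrow> A $$ (i, j) > 0"
    and w_pos: "\<And>i. i < n \<Longrightarrow> w i > 0"
    and eig: "\<And>i. i < n \<Longrightarrow> (\<Sum>j<n. A $$ (i, j) * w j) = r * w i"
  shows "poly (pderiv (char_poly A)) r > 0"
proof -
  have "poly (char_poly (mat_delete A i i)) r > 0" if "i < n" for i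
    by (rule char_poly_principal_minor_pos[OF A that, where w = w]) (use pos w_pos eig in auto)
  then show ?thesis
    unfolding pderiv_char_poly[OF A] poly_sum using \<open>n > 0\<close> by (intro sum_pos) auto
qed

lemma perron_root_of_positive_mat:
  fixes A :: "real mat"
  assumes A: "A \<in> carrier_mat n n" and card: "CARD('n::finite) = n" and "n > 0"
    and pos: "\<And>i j. i < n \<Longrightarrow> j < n \<Longrightarrow> A $$ (i, j) > 0"
  shows "max_real_root A > 0"
    and "\<exists>w. (\<forall>i<n. w i > 0) \<and> (\<forall>i<n. (\<Sum>j<n. A $$ (i, j) * w j) = max_real_root A * w i)"
proof -
  obtain r w where "r > 0" and w_pos: "\<forall>i<n. w i > 0"
    and eig: "\<forall>i<n. (\<Sum>j<n. A $$ (i, j) * w j) = r * w i"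
    using positive_mat_has_positive_eigenvector[OF card pos] by blast
  moreover have "max_real_root A = r"
    by (rule max_real_root_eq_perron_root[OF A \<open>n > 0\<close>, where w = w]) (use pos w_pos eig in \<open>auto intro: less_imp_le\<close>)
  ultimately show "max_real_root A > 0"
    and "\<exists>w. (\<forall>i<n. w i > 0) \<and> (\<forall>i<n. (\<Sum>j<n. A $$ (i, j) * w j) = max_real_root A * w i)"
    by auto
qed

lemma perron_root_between_row_ratios:
  fixes A :: "real mat"
  assumes nonneg: "\<And>i j. i < n \<Longrightarrow> j < n \<Longrightarrow> A $$ (i, j) \<ge> 0"
    and w_pos: "\<And>i. i < n \<Longrightarrow> w i > 0"
    and u_pos: "\<And>i. i < n \<Longrightarrow> u i > 0"
    and eig: "\<And>i. i < n \<Longrightarrow> (\<Sum>j<n. A $$ (i, j) * u j) = x * u i"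
    and "n > 0"
  shows "\<exists>i<n. \<exists>k<n. (\<Sum>j<n. A $$ (k, j) * w j) / w k \<le> x \<and> x \<le> (\<Sum>j<n. A $$ (i, j) * w j) / w i"
proof -
  have "\<exists>i<n. u i \<noteq> 0" using u_pos[OF \<open>n > 0\<close>] \<open>n > 0\<close> by (intro exI[of _ 0]) auto
  then have "\<exists>i<n. \<bar>x\<bar> * w i \<le> (\<Sum>j<n. A $$ (i, j) * w j)"
    by (intro exists_abs_eigenvalue_le_row_ratio[where A=A and u=u]) (use nonneg w_pos eig in auto)
  then obtain i where i: "i < n" "\<bar>x\<bar> * w i \<le> (\<Sum>j<n. A $$ (i, j) * w j)" by blast
  have "x * w i \<le> (\<Sum>j<n. A $$ (i, j) * w j)"
    using mult_right_mono[OF abs_ge_self less_imp_le[OF w_pos[OF i(1)]]] i(2) by (rule order_trans)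
  moreover have "\<exists>k<n. (\<Sum>j<n. A $$ (k, j) * w j) \<le> x * w k"
    by (rule exists_row_ratio_le_positive_eigenvalue[where A=A and u=u])
      (use nonneg w_pos u_pos eig \<open>n > 0\<close> in auto)
  then obtain k where k: "k < n" "(\<Sum>j<n. A $$ (k, j) * w j) \<le> x * w k" by blast
  ultimately show ?thesis
    using i(1) w_pos[OF i(1)] w_pos[OF k(1)]
    by (intro exI[of _ i] exI[of _ k]) (auto simp: pos_le_divide_eq pos_divide_le_eq)
qed

lemma perron_root_continuous:
  fixes A :: "real \<Rightarrow> real mat" and \<rho> :: "real \<Rightarrow> real"
  assumes "n > 0"
    and nonneg: "\<And>t i j. i < n \<Longrightarrow> j < n \<Longrightarrow> A t $$ (i, j) \<ge> 0"
    and perron: "\<And>t. \<exists>u. (\<forall>i<n. u i > 0) \<and> (\<forall>i<n. (\<Sum>j<n. A t $$ (i, j) * u j) = \<rho> t * u i)"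
    and cont: "\<And>i j. i < n \<Longrightarrow> j < n \<Longrightarrow> isCont (\<lambda>t. A t $$ (i, j)) t0"
  shows "isCont \<rho> t0"
proof -
  obtain w where w_pos: "\<And>i. i < n \<Longrightarrow> w i > 0"
    and eig: "\<And>i. i < n \<Longrightarrow> (\<Sum>j<n. A t0 $$ (i, j) * w j) = \<rho> t0 * w i"
    using perron[of t0] by blast
  define f where "f i t = (\<Sum>j<n. A t $$ (i, j) * w j) / w i" for i t
  have f_t0: "f i t0 = \<rho> t0" if "i < n" for i using eig[OF that] w_pos[OF that] by (simp add: f_def)
  have bound: "\<bar>\<rho> t - \<rho> t0\<bar> \<le> (\<Sum>i<n. \<bar>f i t - \<rho> t0\<bar>)" for t
  proof -
    obtain u where "\<forall>i<n. u i > 0" "\<forall>i<n. (\<Sum>j<n. A t $$ (i, j) * u j) = \<rho> t * u i"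
      using perron[of t] by blast
    then have "\<exists>i<n. \<exists>k<n. f k t \<le> \<rho> t \<and> \<rho> t \<le> f i t"
      unfolding f_def
      by (intro perron_root_between_row_ratios[where A="A t" and u=u]) (use nonneg w_pos \<open>n > 0\<close> in auto)
    then obtain i k where ik: "i < n" "k < n" "f k t \<le> \<rho> t" "\<rho> t \<le> f i t" by blast
    have "\<bar>f l t - \<rho> t0\<bar> \<le> (\<Sum>i<n. \<bar>f i t - \<rho> t0\<bar>)" if "l < n" for l
      using that by (intro member_le_sum) auto
    then show ?thesis using ik unfolding abs_le_iff by fastforce
  qed
  have lim: "((\<lambda>t. \<Sum>i<n. \<bar>f i t - \<rho> t0\<bar>) \<longlongrightarrow> 0) (at t0)"
  proof -
    have "((\<lambda>t. \<Sum>i<n. \<bar>f i t - \<rho> t0\<bar>) \<longlongrightarrow> (\<Sum>i<n. \<bar>f i t0 - \<rho> t0\<bar>)) (at t0)"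
      unfolding f_def using cont by (intro tendsto_intros) (auto simp: isCont_def dest: w_pos)
    then show ?thesis using f_t0 by simp
  qed
  have "((\<lambda>t. \<rho> t - \<rho> t0) \<longlongrightarrow> 0) (at t0)"
    by (rule Lim_null_comparison[OF always_eventually lim]) (use bound in simp)
  then show ?thesis unfolding isCont_def by (rule LIM_zero_cancel)
qed

section \<open>Cyclic transfer sums\<close>

primrec kernel_power :: "'a set \<Rightarrow> ('a \<Rightarrow> 'a \<Rightarrow> real) \<Rightarrow> nat \<Rightarrow> 'a \<Rightarrow> 'a \<Rightarrow> real" where
  "kernel_power S W 0 a b = (if a = b then 1 else 0)"
| "kernel_power S W (Suc n) a b = (\<Sum>c\<in>S. kernel_power S W n a c * W c b)"

definition cyclic_transfer_sum :: "'a set \<Rightarrow> ('a \<Rightarrow> 'a \<Rightarrow> real) \<Rightarrow> nat \<Rightarrow> real" where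
  "cyclic_transfer_sum S W M = (\<Sum>\<sigma>\<in>Pi\<^sub>E {..<M} (\<lambda>_. S). \<Prod>m<M. W (\<sigma> m) (\<sigma> (Suc m mod M)))"

lemma sum_PiE_insert:
  assumes "x \<notin> I" "finite I" "\<And>i. finite (T i)"
  shows "(\<Sum>\<sigma>\<in>Pi\<^sub>E (insert x I) T. F \<sigma>) = (\<Sum>y\<in>T x. \<Sum>\<tau>\<in>Pi\<^sub>E I T. F (\<tau>(x := y)))"
proof -
  have "(\<Sum>\<sigma>\<in>Pi\<^sub>E (insert x I) T. F \<sigma>) = (\<Sum>(y, \<tau>)\<in>T x \<times> Pi\<^sub>E I T. F (\<tau>(x := y)))"
    unfolding PiE_insert_eq
    by (subst sum.reindex) (use inj_combinator[OF assms(1)] in \<open>simp_all add: case_prod_unfold\<close>)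
  then show ?thesis by (simp add: sum.cartesian_product)
qed

lemma sum_kernel_power_0:
  assumes "finite S" "a \<in> S"
  shows "(\<Sum>b\<in>S. kernel_power S W 0 a b * f b) = f a"
proof -
  have "(\<Sum>b\<in>S. kernel_power S W 0 a b * f b) = (\<Sum>b\<in>S. if a = b then f b else 0)"
    by (rule sum.cong) auto
  then show ?thesis using assms by simp
qed

lemma sum_PiE_open_chain:
  assumes S: "finite S"
  shows "(\<Sum>\<sigma>\<in>Pi\<^sub>E {..<Suc n} (\<lambda>_. S). (\<Prod>m<n. W (\<sigma> m) (\<sigma> (Suc m))) * g (\<sigma> 0) (\<sigma> n))
       = (\<Sum>a\<in>S. \<Sum>b\<in>S. kernel_power S W n a b * g a b)"
proof (induction n arbitrary: g)
  case 0
  have "(\<Sum>\<sigma>\<in>Pi\<^sub>E {..<Suc 0} (\<lambda>_. S). g (\<sigma> 0) (\<sigma> 0)) = (\<Sum>a\<in>S. g a a)"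
    using S by (simp add: lessThan_Suc sum_PiE_insert)
  also have "\<dots> = (\<Sum>a\<in>S. \<Sum>b\<in>S. kernel_power S W 0 a b * g a b)"
    using S by (intro sum.cong refl) (simp only: sum_kernel_power_0)
  finally show ?case by simp
next
  case (Suc n)
  have "{..<Suc (Suc n)} = insert (Suc n) {..<Suc n}" by auto
  then have "(\<Sum>\<sigma>\<in>Pi\<^sub>E {..<Suc (Suc n)} (\<lambda>_. S).
        (\<Prod>m<Suc n. W (\<sigma> m) (\<sigma> (Suc m))) * g (\<sigma> 0) (\<sigma> (Suc n)))
      = (\<Sum>y\<in>S. \<Sum>\<tau>\<in>Pi\<^sub>E {..<Suc n} (\<lambda>_. S). (\<Prod>m<Suc n. W ((\<tau>(Suc n := y)) m) ((\<tau>(Suc n := y)) (Suc m)))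
          * g ((\<tau>(Suc n := y)) 0) ((\<tau>(Suc n := y)) (Suc n)))"
    using S by (simp add: sum_PiE_insert)
  also have "\<dots> = (\<Sum>y\<in>S. \<Sum>\<tau>\<in>Pi\<^sub>E {..<Suc n} (\<lambda>_. S).
      (\<Prod>m<n. W (\<tau> m) (\<tau> (Suc m))) * (W (\<tau> n) y * g (\<tau> 0) y))"
  proof (intro sum.cong refl)
    fix y \<tau>
    have "(\<Prod>m<n. W ((\<tau>(Suc n := y)) m) ((\<tau>(Suc n := y)) (Suc m))) = (\<Prod>m<n. W (\<tau> m) (\<tau> (Suc m)))"
      by (intro prod.cong) auto
    then show "(\<Prod>m<Suc n. W ((\<tau>(Suc n := y)) m) ((\<tau>(Suc n := y)) (Suc m)))
        * g ((\<tau>(Suc n := y)) 0) ((\<tau>(Suc n := y)) (Suc n))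
      = (\<Prod>m<n. W (\<tau> m) (\<tau> (Suc m))) * (W (\<tau> n) y * g (\<tau> 0) y)"
      by (simp add: lessThan_Suc)
  qed
  also have "\<dots> = (\<Sum>y\<in>S. \<Sum>a\<in>S. \<Sum>b\<in>S. kernel_power S W n a b * (W b y * g a y))"
    using Suc.IH[of "\<lambda>a b. W b _ * g a _"] by simp
  also have "\<dots> = (\<Sum>a\<in>S. \<Sum>b\<in>S. kernel_power S W (Suc n) a b * g a b)"
    by (subst sum.swap) (simp add: sum_distrib_right sum_distrib_left mult_ac)
  finally show ?case .
qed

lemma kernel_power_nonneg:
  assumes "\<And>a b. a \<in> S \<Longrightarrow> b \<in> S \<Longrightarrow> W a b \<ge> 0" "b \<in> S"
  shows "kernel_power S W n a b \<ge> 0"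
  using assms(2) by (induction n arbitrary: b) (auto intro!: sum_nonneg mult_nonneg_nonneg assms(1))

lemma kernel_power_eigenvector:
  assumes S: "finite S" and eig: "\<And>a. a \<in> S \<Longrightarrow> (\<Sum>b\<in>S. W a b * v b) = \<rho> * v a"
    and a: "a \<in> S"
  shows "(\<Sum>b\<in>S. kernel_power S W n a b * v b) = \<rho> ^ n * v a"
proof (induction n)
  case 0
  show ?case using S a by (simp only: sum_kernel_power_0 power_0 mult_1)
next
  case (Suc n)
  have "(\<Sum>b\<in>S. kernel_power S W (Suc n) a b * v b) = (\<Sum>c\<in>S. kernel_power S W n a c * (\<Sum>b\<in>S. W c b * v b))"
    by (simp add: sum_distrib_right sum_distrib_left mult.assoc) (rule sum.swap)
  also have "\<dots> = (\<Sum>c\<in>S. kernel_power S W n a c * (\<rho> * v c))"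
    by (rule sum.cong) (simp_all add: eig)
  also have "\<dots> = \<rho> * (\<Sum>c\<in>S. kernel_power S W n a c * v c)"
    by (simp add: sum_distrib_left mult_ac)
  finally show ?case using Suc by simp
qed

lemma cyclic_transfer_sum_Suc:
  assumes "finite S"
  shows "cyclic_transfer_sum S W (Suc n) = (\<Sum>a\<in>S. \<Sum>b\<in>S. kernel_power S W n a b * W b a)"
proof -
  have "(\<Prod>m<Suc n. W (\<sigma> m) (\<sigma> (Suc m mod Suc n))) = (\<Prod>m<n. W (\<sigma> m) (\<sigma> (Suc m))) * W (\<sigma> n) (\<sigma> 0)"
    for \<sigma> :: "nat \<Rightarrow> 'a"
  proof -
    have "(\<Prod>m<n. W (\<sigma> m) (\<sigma> (Suc m mod Suc n))) = (\<Prod>m<n. W (\<sigma> m) (\<sigma> (Suc m)))"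
      by (intro prod.cong) auto
    then show ?thesis by (simp add: lessThan_Suc)
  qed
  then show ?thesis
    unfolding cyclic_transfer_sum_def using sum_PiE_open_chain[OF assms, where n=n and W=W and g="\<lambda>a b. W b a"] by simp
qed

lemma cyclic_transfer_sum_pos:
  assumes "finite S" "S \<noteq> {}" "\<And>a b. W a b > 0"
  shows "cyclic_transfer_sum S W M > 0"
  unfolding cyclic_transfer_sum_def using assms
  by (intro sum_pos) (auto simp: finite_PiE PiE_eq_empty_iff intro!: prod_pos)

text \<open>Since \<open>W b a\<close> is comparable to \<open>v b\<close> uniformly in \<open>a\<close>, closing the chain costs only a
  bounded factor: \<open>cyclic_transfer_sum S W (Suc n)\<close> is comparable to \<open>\<rho> ^ n\<close>.\<close>

lemma cyclic_transfer_sum_bounds: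
  assumes S: "finite S" "S \<noteq> {}"
    and W_pos: "\<And>a b. a \<in> S \<Longrightarrow> b \<in> S \<Longrightarrow> W a b > 0"
    and v_pos: "\<And>a. a \<in> S \<Longrightarrow> v a > 0"
    and eig: "\<And>a. a \<in> S \<Longrightarrow> (\<Sum>b\<in>S. W a b * v b) = \<rho> * v a"
  shows "\<exists>c>0. \<exists>C>0. \<forall>n. c * \<rho> ^ n \<le> cyclic_transfer_sum S W (Suc n) \<and>
    cyclic_transfer_sum S W (Suc n) \<le> C * \<rho> ^ n"
proof -
  define R where "R = (\<lambda>(a, b). W b a / v b) ` (S \<times> S)"
  have R: "finite R" "R \<noteq> {}" "\<forall>x\<in>R. x > 0" using S W_pos v_pos by (auto simp: R_def)
  define c where "c = Min R * (\<Sum>a\<in>S. v a)"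
  define C where "C = Max R * (\<Sum>a\<in>S. v a)"
  have V_pos: "(\<Sum>a\<in>S. v a) > 0" using S v_pos by (intro sum_pos) auto
  have W_ratio: "Min R * v b \<le> W b a" "W b a \<le> Max R * v b" if "a \<in> S" "b \<in> S" for a b
  proof -
    have "W b a / v b \<in> R" using that unfolding R_def by force
    then have "Min R \<le> W b a / v b" "W b a / v b \<le> Max R" using R(1) by auto
    then show "Min R * v b \<le> W b a" "W b a \<le> Max R * v b"
      using v_pos[OF that(2)] by (simp_all add: pos_le_divide_eq pos_divide_le_eq)
  qed
  have P_nonneg: "kernel_power S W n a b \<ge> 0" if "b \<in> S" for n a b
    using W_pos that by (intro kernel_power_nonneg) (auto intro: less_imp_le)
  have P_eig: "(\<Sum>a\<in>S. \<Sum>b\<in>S. kernel_power S W n a b * (K * v b)) = K * (\<Sum>a\<in>S. v a) * \<rho> ^ n"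
    for n K
  proof -
    have "(\<Sum>a\<in>S. \<Sum>b\<in>S. kernel_power S W n a b * (K * v b))
        = (\<Sum>a\<in>S. K * (\<Sum>b\<in>S. kernel_power S W n a b * v b))"
      by (simp add: sum_distrib_left mult_ac)
    also have "\<dots> = (\<Sum>a\<in>S. K * (\<rho> ^ n * v a))"
      using kernel_power_eigenvector[OF S(1) eig] by (intro sum.cong) auto
    finally show ?thesis by (simp add: sum_distrib_left mult_ac)
  qed
  have "c * \<rho> ^ n \<le> cyclic_transfer_sum S W (Suc n)" for n
    unfolding cyclic_transfer_sum_Suc[OF S(1)] c_def P_eig[symmetric]
    by (intro sum_mono mult_left_mono W_ratio P_nonneg)
  moreover have "cyclic_transfer_sum S W (Suc n) \<le> C * \<rho> ^ n" for n
    unfolding cyclic_transfer_sum_Suc[OF S(1)] C_def P_eig[symmetric]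
    by (intro sum_mono mult_left_mono W_ratio P_nonneg)
  moreover have "c > 0" "C > 0"
    using R Min_in[OF R(1,2)] Max_in[OF R(1,2)] V_pos by (auto simp: c_def C_def)
  ultimately show ?thesis by blast
qed

lemma ln_over_n_tendsto_of_geometric_bounds:
  fixes z :: "nat \<Rightarrow> real"
  assumes "c > 0" "C > 0" "\<rho> > 0"
    and lower: "\<And>n. c * \<rho> ^ n \<le> z (Suc n)" and upper: "\<And>n. z (Suc n) \<le> C * \<rho> ^ n"
  shows "(\<lambda>M. ln (z M) / real M) \<longlonglongrightarrow> ln \<rho>"
proof (rule tendsto_sandwich[OF eventually_sequentiallyI eventually_sequentiallyI])
  have bounds: "ln \<rho> + (ln c - ln \<rho>) / M \<le> ln (z M) / M \<and> ln (z M) / M \<le> ln \<rho> + (ln C - ln \<rho>) / M"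
    if M1: "M \<ge> 1" for M
  proof -
    obtain n where M: "M = Suc n" using M1 by (cases M) auto
    have "0 < c * \<rho> ^ n" using assms(1,3) by simp
    then have "ln (c * \<rho> ^ n) \<le> ln (z M) \<and> ln (z M) \<le> ln (C * \<rho> ^ n)"
      using lower[of n] upper[of n] M by simp
    then have "ln c + n * ln \<rho> \<le> ln (z M)" "ln (z M) \<le> ln C + n * ln \<rho>"
      using assms(1-3) by (simp_all add: ln_mult ln_realpow)
    then have "(ln c + n * ln \<rho>) / M \<le> ln (z M) / M" "ln (z M) / M \<le> (ln C + n * ln \<rho>) / M"
      by (simp_all add: divide_right_mono)
    moreover have "(a + n * ln \<rho>) / M = ln \<rho> + (a - ln \<rho>) / M" for a
      using M by (simp add: field_simps)
    ultimately show ?thesis by simp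
  qed
  then show "ln \<rho> + (ln c - ln \<rho>) / real M \<le> ln (z M) / real M"
    and "ln (z M) / real M \<le> ln \<rho> + (ln C - ln \<rho>) / real M" if "M \<ge> 1" for M
    using that by blast+
  have lim: "(\<lambda>M. ln \<rho> + (a - ln \<rho>) / real M) \<longlonglongrightarrow> ln \<rho>" for a
    using tendsto_add[OF tendsto_const tendsto_divide_0[OF tendsto_const
        filterlim_at_top_imp_at_infinity[OF filterlim_real_sequentially]]]
    by simp
  show "(\<lambda>M. ln \<rho> + (ln c - ln \<rho>) / real M) \<longlonglongrightarrow> ln \<rho>"
    and "(\<lambda>M. ln \<rho> + (ln C - ln \<rho>) / real M) \<longlonglongrightarrow> ln \<rho>" by (rule lim)+
qed

lemma ln_cyclic_transfer_sum_tendsto: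
  assumes "finite S" "S \<noteq> {}"
    and "\<And>a b. a \<in> S \<Longrightarrow> b \<in> S \<Longrightarrow> W a b > 0"
    and "\<And>a. a \<in> S \<Longrightarrow> v a > 0"
    and "\<And>a. a \<in> S \<Longrightarrow> (\<Sum>b\<in>S. W a b * v b) = \<rho> * v a"
    and "\<rho> > 0"
  shows "(\<lambda>M. ln (cyclic_transfer_sum S W M) / real M) \<longlonglongrightarrow> ln \<rho>"
proof -
  obtain c C where "c > 0" "C > 0"
    and "\<forall>n. c * \<rho> ^ n \<le> cyclic_transfer_sum S W (Suc n) \<and>
      cyclic_transfer_sum S W (Suc n) \<le> C * \<rho> ^ n"
    using cyclic_transfer_sum_bounds[OF assms(1-5)] by blast
  then show ?thesis by (intro ln_over_n_tendsto_of_geometric_bounds[of c C] \<open>\<rho> > 0\<close>) auto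
qed

lemma equitable_partition_lifts_eigenvector:
  fixes W :: "'a \<Rightarrow> 'a \<Rightarrow> real" and G :: "nat \<Rightarrow> 'a set"
  assumes fin: "\<And>j. j < n \<Longrightarrow> finite (G j)" and disj: "disjoint_family_on G {..<n}"
    and rows: "\<And>i j k. i < n \<Longrightarrow> j < n \<Longrightarrow> k \<in> G i \<Longrightarrow> (\<Sum>l\<in>G j. W k l) = Q i j"
    and w_pos: "\<And>i. i < n \<Longrightarrow> w i > 0"
    and eig: "\<And>i. i < n \<Longrightarrow> (\<Sum>j<n. Q i j * w j) = r * w i"
  shows "\<exists>v. (\<forall>k\<in>(\<Union>j<n. G j). v k > 0) \<and>
    (\<forall>k\<in>(\<Union>j<n. G j). (\<Sum>l\<in>(\<Union>j<n. G j). W k l * v l) = r * v k)"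
proof -
  define c where "c l = (THE j. j < n \<and> l \<in> G j)" for l
  have c: "c l = j" if "j < n" "l \<in> G j" for j l
    unfolding c_def using that disj by (auto simp: disjoint_family_on_def)
  have "(\<Sum>l\<in>(\<Union>j<n. G j). W k l * w (c l)) = r * w (c k)" if "i < n" "k \<in> G i" for i k
  proof -
    have "(\<Sum>l\<in>(\<Union>j<n. G j). W k l * w (c l)) = (\<Sum>j<n. \<Sum>l\<in>G j. W k l * w (c l))"
      using fin disj by (intro sum.UNION_disjoint_family) auto
    also have "\<dots> = (\<Sum>j<n. (\<Sum>l\<in>G j. W k l) * w j)"
      by (intro sum.cong refl) (simp add: c sum_distrib_right)
    also have "\<dots> = r * w (c k)" using rows that eig c by simp
    finally show ?thesis .
  qed
  then show ?thesis using w_pos c by (intro exI[of _ "\<lambda>l. w (c l)"]) fastforce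
qed

lemma positive_eigenvector_bij_betw:
  assumes h: "bij_betw h K S"
    and W: "\<And>k l. k \<in> K \<Longrightarrow> l \<in> K \<Longrightarrow> W (h k) (h l) = V k l"
    and v: "\<forall>k\<in>K. v k > 0" "\<forall>k\<in>K. (\<Sum>l\<in>K. V k l * v l) = r * v k"
  shows "\<exists>u. (\<forall>a\<in>S. u a > 0) \<and> (\<forall>a\<in>S. (\<Sum>b\<in>S. W a b * u b) = r * u a)"
proof (intro exI[of _ "\<lambda>a. v (inv_into K h a)"] conjI ballI)
  fix a assume a: "a \<in> S"
  then obtain k where k: "k \<in> K" "a = h k" using h by (auto simp: bij_betw_def)
  have inv: "inv_into K h (h l) = l" if "l \<in> K" for l
    using h that by (simp add: bij_betw_def)
  show "v (inv_into K h a) > 0" using v(1) k inv by simp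
  have "(\<Sum>b\<in>S. W a b * v (inv_into K h b)) = (\<Sum>l\<in>K. W (h k) (h l) * v (inv_into K h (h l)))"
    using k by (simp add: sum.reindex_bij_betw[OF h, symmetric])
  also have "\<dots> = r * v (inv_into K h a)" using v(2) k W inv by simp
  finally show "(\<Sum>b\<in>S. W a b * v (inv_into K h b)) = r * v (inv_into K h a)" .
qed

section \<open>Twice differentiable functions\<close>

lemma poly_eq_sum_coeff:
  fixes p :: "'a::comm_semiring_1 poly"
  assumes "degree p \<le> N"
  shows "poly p y = (\<Sum>k\<le>N. coeff p k * y ^ k)"
  unfolding poly_altdef using assms
  by (intro sum.mono_neutral_left) (auto simp: coeff_eq_0)

text \<open>Implicit differentiation of a simple root: writing \<open>coeff (P s) k - coeff (P t) k = h k s * (s - t)\<close>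
  and \<open>poly (P t) y - poly (P t) x\<^sub>0 = g y * (y - x\<^sub>0)\<close> (Caratheodory), the root equation gives
  \<open>(lam s - lam t) * g (lam s) = - (s - t) * (\<Sum>k\<le>N. h k s * lam s ^ k)\<close>.\<close>

lemma has_real_derivative_simple_root:
  fixes P :: "real \<Rightarrow> real poly" and lam :: "real \<Rightarrow> real"
  assumes deg: "\<And>s. degree (P s) \<le> N"
    and coeff_deriv: "\<And>k. ((\<lambda>s. coeff (P s) k) has_real_derivative d k) (at t)"
    and cont: "isCont lam t"
    and root: "\<forall>\<^sub>F s in nhds t. poly (P s) (lam s) = 0"
    and simple: "poly (pderiv (P t)) (lam t) \<noteq> 0"
  shows "(lam has_real_derivative - (\<Sum>k\<le>N. d k * lam t ^ k) / poly (pderiv (P t)) (lam t)) (at t)"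
proof -
  have "\<forall>k. \<exists>h. (\<forall>s. coeff (P s) k - coeff (P t) k = h s * (s - t)) \<and> isCont h t \<and> h t = d k"
    using CARAT_DERIV[THEN iffD1, OF coeff_deriv] by blast
  then have "\<exists>h. \<forall>k. (\<forall>s. coeff (P s) k - coeff (P t) k = h k s * (s - t)) \<and> isCont (h k) t \<and> h k t = d k"
    by (rule choice)
  then obtain h where h: "\<And>k s. coeff (P s) k - coeff (P t) k = h k s * (s - t)"
    and h_cont: "\<And>k. isCont (h k) t" and h_t: "\<And>k. h k t = d k"
    by blast
  obtain g where g: "\<And>y. poly (P t) y - poly (P t) (lam t) = g y * (y - lam t)"
    and g_cont: "isCont g (lam t)" and g_t: "g (lam t) = poly (pderiv (P t)) (lam t)"
    using CARAT_DERIV[THEN iffD1, OF poly_DERIV] by blast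
  define H where "H s = (\<Sum>k\<le>N. h k s * lam s ^ k)" for s
  have root_t: "poly (P t) (lam t) = 0" using root unfolding eventually_nhds by blast
  have expand: "poly (P s) y = poly (P t) y + (s - t) * (\<Sum>k\<le>N. h k s * y ^ k)" for s y
  proof -
    have coeff_s: "coeff (P s) k = coeff (P t) k + h k s * (s - t)" for k
      using h[where k=k and s=s] by simp
    have "poly (P s) y = (\<Sum>k\<le>N. (coeff (P t) k + h k s * (s - t)) * y ^ k)"
      unfolding poly_eq_sum_coeff[OF deg] coeff_s ..
    also have "\<dots> = poly (P t) y + (s - t) * (\<Sum>k\<le>N. h k s * y ^ k)"
      by (simp add: poly_eq_sum_coeff[OF deg] distrib_left distrib_right sum.distrib sum_distrib_left mult_ac)
    finally show ?thesis .
  qed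
  have key: "(lam s - lam t) * g (lam s) = - ((s - t) * H s)" if "poly (P s) (lam s) = 0" for s
  proof -
    have "(lam s - lam t) * g (lam s) = poly (P t) (lam s)" using g[of "lam s"] root_t by simp
    also have "\<dots> = - ((s - t) * H s)" using expand[of s "lam s"] that unfolding H_def by linarith
    finally show ?thesis .
  qed
  have g_lam: "((\<lambda>s. g (lam s)) \<longlongrightarrow> poly (pderiv (P t)) (lam t)) (at t)"
    using isCont_tendsto_compose[OF g_cont cont[unfolded isCont_def]] g_t by simp
  have lim: "((\<lambda>s. - H s / g (lam s)) \<longlongrightarrow> - (\<Sum>k\<le>N. d k * lam t ^ k) / poly (pderiv (P t)) (lam t)) (at t)"
    unfolding H_def using h_cont cont simple h_t
    by (intro tendsto_intros g_lam) (auto simp: isCont_def)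
  have "\<forall>\<^sub>F s in at t. poly (P s) (lam s) = 0"
    using root unfolding eventually_at_filter by (auto elim: eventually_mono)
  then have "\<forall>\<^sub>F s in at t. - H s / g (lam s) = (lam s - lam t) / (s - t)"
    using tendsto_imp_eventually_ne[OF g_lam simple] eventually_neq_at_within[of t t UNIV]
  proof eventually_elim
    case (elim s)
    then show ?case using key[of s] by (simp add: field_simps)
  qed
  with lim show ?thesis
    unfolding has_field_derivative_iff by (rule Lim_transform_eventually)
qed

definition twice_differentiable_on :: "real set \<Rightarrow> (real \<Rightarrow> real) \<Rightarrow> bool" where
  "twice_differentiable_on S f \<longleftrightarrow>
    (\<exists>f'. \<forall>t\<in>S. (f has_real_derivative f' t) (at t) \<and> f' differentiable (at t))"

lemma twice_differentiable_onD:
  assumes "twice_differentiable_on S f" "t \<in> S"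
  shows "f differentiable (at t)"
  using assms unfolding twice_differentiable_on_def real_differentiable_def by blast

lemma twice_differentiable_on_const: "twice_differentiable_on S (\<lambda>t. c)"
  unfolding twice_differentiable_on_def by (intro exI[of _ "\<lambda>_. 0"]) auto

lemma twice_differentiable_on_add:
  assumes "twice_differentiable_on S f" "twice_differentiable_on S g"
  shows "twice_differentiable_on S (\<lambda>t. f t + g t)"
proof -
  obtain f' g' where "\<forall>t\<in>S. (f has_real_derivative f' t) (at t) \<and> f' differentiable (at t)"
    and "\<forall>t\<in>S. (g has_real_derivative g' t) (at t) \<and> g' differentiable (at t)"
    using assms unfolding twice_differentiable_on_def by blast
  then show ?thesis unfolding twice_differentiable_on_def
    by (intro exI[of _ "\<lambda>t. f' t + g' t"]) (auto intro!: derivative_intros)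
qed

lemma twice_differentiable_on_minus:
  assumes "twice_differentiable_on S f"
  shows "twice_differentiable_on S (\<lambda>t. - f t)"
proof -
  obtain f' where "\<forall>t\<in>S. (f has_real_derivative f' t) (at t) \<and> f' differentiable (at t)"
    using assms unfolding twice_differentiable_on_def by blast
  then show ?thesis unfolding twice_differentiable_on_def
    by (intro exI[of _ "\<lambda>t. - f' t"]) (auto intro!: derivative_intros)
qed

lemma twice_differentiable_on_mult:
  assumes "twice_differentiable_on S f" "twice_differentiable_on S g"
  shows "twice_differentiable_on S (\<lambda>t. f t * g t)"
proof -
  obtain f' g' where f: "\<forall>t\<in>S. (f has_real_derivative f' t) (at t) \<and> f' differentiable (at t)"
    and g: "\<forall>t\<in>S. (g has_real_derivative g' t) (at t) \<and> g' differentiable (at t)"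
    using assms unfolding twice_differentiable_on_def by blast
  have "f differentiable (at t)" "g differentiable (at t)" if "t \<in> S" for t
    using twice_differentiable_onD assms that by blast+
  with f g show ?thesis unfolding twice_differentiable_on_def
    by (intro exI[of _ "\<lambda>t. f' t * g t + f t * g' t"]) (auto intro!: derivative_eq_intros derivative_intros)
qed

lemma twice_differentiable_on_sum:
  assumes "\<And>i. i \<in> I \<Longrightarrow> twice_differentiable_on S (f i)"
  shows "twice_differentiable_on S (\<lambda>t. \<Sum>i\<in>I. f i t)"
  using assms
  by (induction I rule: infinite_finite_induct)
    (simp_all add: twice_differentiable_on_const twice_differentiable_on_add)

lemma twice_differentiable_on_ln:
  assumes f: "twice_differentiable_on S f" and pos: "\<And>t. t \<in> S \<Longrightarrow> f t > 0"
  shows "twice_differentiable_on S (\<lambda>t. ln (f t))"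
proof -
  obtain f' where f': "\<forall>t\<in>S. (f has_real_derivative f' t) (at t) \<and> f' differentiable (at t)"
    using f unfolding twice_differentiable_on_def by blast
  have "f differentiable (at t)" if "t \<in> S" for t using twice_differentiable_onD f that by blast
  with f' pos show ?thesis unfolding twice_differentiable_on_def
    by (intro exI[of _ "\<lambda>t. f' t / f t"]) (auto intro!: derivative_eq_intros derivative_intros dest: pos)
qed

lemma twice_differentiable_on_exp_divide:
  assumes "0 \<notin> S"
  shows "twice_differentiable_on S (\<lambda>t. exp (c / t))"
proof -
  have exp_deriv: "((\<lambda>t. exp (c / t)) has_real_derivative exp (c / t) * (- c / t\<^sup>2)) (at t)"
    and deriv_diff: "(\<lambda>t. exp (c / t) * (- c / t\<^sup>2)) differentiable (at t)" if "t \<noteq> 0" for t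
    using that unfolding real_differentiable_def
    by (auto intro!: exI derivative_eq_intros simp: power2_eq_square)
  show ?thesis unfolding twice_differentiable_on_def
    by (intro exI[of _ "\<lambda>t. exp (c / t) * (- c / t\<^sup>2)"] ballI conjI exp_deriv deriv_diff)
      (use assms in auto)
qed

lemma twice_differentiable_on_coeff_mult:
  fixes p q :: "real \<Rightarrow> real poly"
  assumes "\<And>k. twice_differentiable_on S (\<lambda>t. coeff (p t) k)"
    and "\<And>k. twice_differentiable_on S (\<lambda>t. coeff (q t) k)"
  shows "twice_differentiable_on S (\<lambda>t. coeff (p t * q t) k)"
  unfolding coeff_mult
  by (intro twice_differentiable_on_sum twice_differentiable_on_mult assms)

lemma twice_differentiable_on_coeff_prod:
  fixes P :: "'i \<Rightarrow> real \<Rightarrow> real poly"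
  assumes "\<And>i k. i \<in> I \<Longrightarrow> twice_differentiable_on S (\<lambda>t. coeff (P i t) k)"
  shows "twice_differentiable_on S (\<lambda>t. coeff (\<Prod>i\<in>I. P i t) k)"
  using assms
proof (induction I arbitrary: k rule: infinite_finite_induct)
  case (insert x F)
  then show ?case by (simp add: twice_differentiable_on_coeff_mult)
qed (simp_all add: twice_differentiable_on_const)

lemma twice_differentiable_on_coeff_det:
  fixes M :: "real \<Rightarrow> real poly mat"
  assumes dim: "\<And>t. M t \<in> carrier_mat n n"
    and entries: "\<And>i j k. i < n \<Longrightarrow> j < n \<Longrightarrow> twice_differentiable_on S (\<lambda>t. coeff (M t $$ (i, j)) k)"
  shows "twice_differentiable_on S (\<lambda>t. coeff (det (M t)) k)"
proof -
  have "coeff (det (M t)) k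
      = (\<Sum>p\<in>{p. p permutes {0..<n}}. coeff (signof p * (\<Prod>i = 0..<n. M t $$ (i, p i))) k)" for t
    by (simp add: det_def'[OF dim] coeff_sum)
  moreover have "twice_differentiable_on S (\<lambda>t. coeff (signof p * (\<Prod>i = 0..<n. M t $$ (i, p i))) k)"
    if "p permutes {0..<n}" for p
    using permutes_in_image[OF that] entries
    by (intro twice_differentiable_on_coeff_mult twice_differentiable_on_coeff_prod
        twice_differentiable_on_const) auto
  ultimately show ?thesis by (simp only:) (rule twice_differentiable_on_sum, simp)
qed

lemma twice_differentiable_on_coeff_char_poly:
  fixes A :: "real \<Rightarrow> real mat"
  assumes dim: "\<And>t. A t \<in> carrier_mat n n"
    and entries: "\<And>i j. i < n \<Longrightarrow> j < n \<Longrightarrow> twice_differentiable_on S (\<lambda>t. A t $$ (i, j))"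
  shows "twice_differentiable_on S (\<lambda>t. coeff (char_poly (A t)) k)"
  unfolding char_poly_def
proof (rule twice_differentiable_on_coeff_det)
  show "char_poly_matrix (A t) \<in> carrier_mat n n" for t using dim by simp
  fix i j k assume ij: "i < n" "j < n"
  have "coeff (char_poly_matrix (A t) $$ (i, j)) k
      = (if i = j then coeff [:0, 1:] k else 0) + (if k = 0 then - A t $$ (i, j) else 0)" for t
    using dim[of t] ij by (cases k) (auto simp: char_poly_matrix_def coeff_pCons split: nat.splits)
  moreover have "twice_differentiable_on S (\<lambda>t. if k = 0 then - A t $$ (i, j) else 0)"
    using entries[OF ij]
    by (cases "k = 0") (simp_all add: twice_differentiable_on_minus twice_differentiable_on_const)
  ultimately show "twice_differentiable_on S (\<lambda>t. coeff (char_poly_matrix (A t) $$ (i, j)) k)"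
    by (simp only:) (rule twice_differentiable_on_add[OF twice_differentiable_on_const])
qed

lemma twice_differentiable_on_simple_root:
  fixes P :: "real \<Rightarrow> real poly" and lam :: "real \<Rightarrow> real"
  assumes "open S"
    and deg: "\<And>s. degree (P s) \<le> N"
    and coeffs: "\<And>k. twice_differentiable_on S (\<lambda>s. coeff (P s) k)"
    and cont: "continuous_on S lam"
    and root: "\<And>s. s \<in> S \<Longrightarrow> poly (P s) (lam s) = 0"
    and simple: "\<And>s. s \<in> S \<Longrightarrow> poly (pderiv (P s)) (lam s) \<noteq> 0"
  shows "twice_differentiable_on S lam"
proof -
  have "\<forall>k. \<exists>c'. \<forall>t\<in>S.
      ((\<lambda>s. coeff (P s) k) has_real_derivative c' t) (at t) \<and> c' differentiable (at t)"
    using coeffs unfolding twice_differentiable_on_def by blast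
  then have "\<exists>c'. \<forall>k. \<forall>t\<in>S.
      ((\<lambda>s. coeff (P s) k) has_real_derivative c' k t) (at t) \<and> c' k differentiable (at t)"
    by (rule choice)
  then obtain c' where c': "\<And>k t. t \<in> S \<Longrightarrow> ((\<lambda>s. coeff (P s) k) has_real_derivative c' k t) (at t)"
    "\<And>k t. t \<in> S \<Longrightarrow> c' k differentiable (at t)"
    by blast
  define D where "D t = - (\<Sum>k\<le>N. c' k t * lam t ^ k) / (\<Sum>k\<le>N. of_nat (Suc k) * coeff (P t) (Suc k) * lam t ^ k)"
    for t
  have pderiv_eq: "poly (pderiv (P t)) (lam t) = (\<Sum>k\<le>N. of_nat (Suc k) * coeff (P t) (Suc k) * lam t ^ k)" for t
    using deg[of t] by (simp add: poly_eq_sum_coeff[of _ N] coeff_pderiv degree_pderiv)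
  have lam_deriv: "(lam has_real_derivative D t) (at t)" if "t \<in> S" for t
    unfolding D_def pderiv_eq[symmetric]
  proof (rule has_real_derivative_simple_root[OF deg c'(1)[OF that]])
    show "isCont lam t" using cont \<open>open S\<close> that by (simp add: continuous_on_eq_continuous_at)
    show "\<forall>\<^sub>F s in nhds t. poly (P s) (lam s) = 0"
      using eventually_nhds_in_open[OF \<open>open S\<close> that] root by (auto elim: eventually_mono)
  qed (use simple that in auto)
  have "D differentiable (at t)" if "t \<in> S" for t
  proof -
    have "lam differentiable (at t)" using lam_deriv[OF that] real_differentiable_def by blast
    moreover have "(\<lambda>s. coeff (P s) k) differentiable (at t)" for k
      using twice_differentiable_onD[OF coeffs that] .
    ultimately show ?thesis
      unfolding D_def using c'(2)[OF that] simple[OF that] pderiv_eq[of t]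
      by (intro derivative_intros) auto
  qed
  with lam_deriv show ?thesis unfolding twice_differentiable_on_def by blast
qed

lemma free_energy_derivatives:
  fixes L F :: "real \<Rightarrow> real"
  assumes L: "twice_differentiable_on S L" and S: "open S" "0 \<notin> S" "T \<in> S"
    and F: "\<And>t. t \<in> S \<Longrightarrow> F t = - k * t * L t"
    and U: "\<And>t. U t = - t\<^sup>2 * deriv (\<lambda>s. F s / s) t"
  shows "(\<lambda>t. F t / t) differentiable (at T)"
    and "U T = k * T\<^sup>2 * deriv L T"
    and "deriv L differentiable (at T)"
    and "U differentiable (at T)"
    and "deriv U T = 2 * k * T * deriv L T + k * T\<^sup>2 * deriv (deriv L) T"
proof -
  obtain L' where L': "\<And>t. t \<in> S \<Longrightarrow> (L has_real_derivative L' t) (at t)"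
    and L'_diff: "\<And>t. t \<in> S \<Longrightarrow> L' differentiable (at t)"
    using L unfolding twice_differentiable_on_def by blast
  obtain L'' where L'': "(L' has_real_derivative L'') (at T)"
    using L'_diff[OF S(3)] real_differentiable_def by blast
  have deriv_L: "deriv L t = L' t" if "t \<in> S" for t using DERIV_imp_deriv[OF L'[OF that]] .
  have F_div: "((\<lambda>s. F s / s) has_real_derivative - k * L' t) (at t)" if "t \<in> S" for t
    by (rule has_field_derivative_transform_within_open[OF DERIV_cmult[OF L'[OF that]] S(1) that])
      (use F S(2) in force)
  have U_eq: "U t = k * t\<^sup>2 * L' t" if "t \<in> S" for t
    unfolding U using DERIV_imp_deriv[OF F_div[OF that]] by simp
  have dL: "(deriv L has_real_derivative L'') (at T)"
    by (rule has_field_derivative_transform_within_open[OF L'' S(1,3)]) (simp add: deriv_L)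
  have dU: "(U has_real_derivative 2 * k * T * L' T + k * T\<^sup>2 * L'') (at T)"
    by (rule has_field_derivative_transform_within_open[OF _ S(1,3), of "\<lambda>t. k * t\<^sup>2 * L' t"])
      (auto intro!: derivative_eq_intros L'' simp: U_eq)
  show "(\<lambda>t. F t / t) differentiable (at T)" using F_div[OF S(3)] real_differentiable_def by blast
  show "U T = k * T\<^sup>2 * deriv L T" using U_eq[OF S(3)] deriv_L[OF S(3)] by simp
  show "deriv L differentiable (at T)" using dL real_differentiable_def by blast
  show "U differentiable (at T)" using dU real_differentiable_def by blast
  show "deriv U T = 2 * k * T * deriv L T + k * T\<^sup>2 * deriv (deriv L) T"
    using DERIV_imp_deriv[OF dU] DERIV_imp_deriv[OF dL] deriv_L[OF S(3)] by simp
qed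

section \<open>The 2 x 2 x M model\<close>

text \<open>Twice the \<open>J\<^sub>1\<close>- and \<open>J\<^sub>2\<close>-brackets of the cube energy, so that they are integers for
  spins \<open>\<plusminus>1\<close>.\<close>

definition nn_bonds :: "(nat \<Rightarrow> 'a::comm_ring_1) \<Rightarrow> (nat \<Rightarrow> 'a) \<Rightarrow> 'a" where
  "nn_bonds a b = (a 0 * a 1 + a 1 * a 2 + a 2 * a 3 + a 3 * a 0)
    + (b 0 * b 1 + b 1 * b 2 + b 2 * b 3 + b 3 * b 0)
    + 2 * (a 0 * b 0 + a 1 * b 1 + a 2 * b 2 + a 3 * b 3)"

definition nnn_bonds :: "(nat \<Rightarrow> 'a::comm_ring_1) \<Rightarrow> (nat \<Rightarrow> 'a) \<Rightarrow> 'a" where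
  "nnn_bonds a b = (a 0 * a 2 + a 1 * a 3) + (b 0 * b 2 + b 1 * b 3)
    + 2 * (a 0 * (b 1 + b 3) + a 1 * (b 2 + b 0) + a 2 * (b 3 + b 1) + a 3 * (b 0 + b 2))"

lemma sum_lessThan_4: "(\<Sum>r<4::nat. f r) = f 0 + f 1 + f 2 + (f 3 :: 'a::comm_monoid_add)"
  by (simp add: eval_nat_numeral ac_simps)

lemma Hpair_eq_bonds: "Hpair J1 J2 a b = - (J1 * nn_bonds a b + J2 * nnn_bonds a b) / 2"
proof -
  have mods: "(0::nat) mod 4 = 0" "(1::nat) mod 4 = 1" "(2::nat) mod 4 = 2" "(3::nat) mod 4 = 3"
    "(0 + 1::nat) mod 4 = 1" "(1 + 1::nat) mod 4 = 2" "(2 + 1::nat) mod 4 = 3" "(3 + 1::nat) mod 4 = 0"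
    "(0 + 2::nat) mod 4 = 2" "(1 + 2::nat) mod 4 = 3" "(2 + 2::nat) mod 4 = 0" "(3 + 2::nat) mod 4 = 1"
    "(0 + 3::nat) mod 4 = 3" "(1 + 3::nat) mod 4 = 0" "(2 + 3::nat) mod 4 = 1" "(3 + 3::nat) mod 4 = 2"
    by simp_all
  show ?thesis
    unfolding Hpair_def nn_bonds_def nnn_bonds_def sum_lessThan_4 mods by (simp add: field_simps)
qed

lemma Hpair_cong:
  assumes "\<And>i. i < 4 \<Longrightarrow> a i = a' i" "\<And>i. i < 4 \<Longrightarrow> b i = b' i"
  shows "Hpair J1 J2 a b = Hpair J1 J2 a' b'"
  unfolding Hpair_eq_bonds nn_bonds_def nnn_bonds_def using assms by simp

text \<open>Row \<open>k - 1\<close> lists the spins \<open>s\<^sub>0, \<dots>, s\<^sub>3\<close> of the layer state with index \<open>k\<close>.\<close>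

definition layer_spins :: "int list list" where
  "layer_spins =
    [[ 1, 1, 1, 1], [-1, 1, 1, 1], [ 1,-1, 1, 1], [-1,-1, 1, 1],
     [ 1, 1,-1, 1], [-1, 1,-1, 1], [ 1,-1,-1, 1], [-1,-1,-1, 1],
     [ 1, 1, 1,-1], [-1, 1, 1,-1], [ 1,-1, 1,-1], [-1,-1, 1,-1],
     [ 1, 1,-1,-1], [-1, 1,-1,-1], [ 1,-1,-1,-1], [-1,-1,-1,-1]]"

definition spin :: "nat \<Rightarrow> nat \<Rightarrow> int" where
  "spin k i = layer_spins ! (k - 1) ! i"

lemma state_eq_spin:
  assumes "k \<in> {1..16}" "i < 4"
  shows "state k i = of_int (spin k i)"
proof -
  have "\<forall>k\<in>set [1..<17]. \<forall>i\<in>set [0..<4]. spin k i = 1 - 2 * int (((k - 1) div 2 ^ i) mod 2)"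
    unfolding spin_def layer_spins_def by code_simp
  then show ?thesis using assms by (simp add: state_def)
qed

lemma of_int_nn_bonds: "nn_bonds (\<lambda>i. of_int (a i)) (\<lambda>i. of_int (b i)) = of_int (nn_bonds a b)"
  by (simp add: nn_bonds_def)

lemma of_int_nnn_bonds: "nnn_bonds (\<lambda>i. of_int (a i)) (\<lambda>i. of_int (b i)) = of_int (nnn_bonds a b)"
  by (simp add: nnn_bonds_def)

definition bond_counts :: "nat \<Rightarrow> nat \<Rightarrow> int \<times> int" where
  "bond_counts k l = (nn_bonds (spin k) (spin l), nnn_bonds (spin k) (spin l))"

lemma theta_eq_bond_counts:
  assumes "k \<in> {1..16}" "l \<in> {1..16}"
  shows "theta kB J1 J2 T k l
    = exp ((J1 * of_int (fst (bond_counts k l)) + J2 * of_int (snd (bond_counts k l))) / (2 * kB * T))"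
proof -
  have "Hpair J1 J2 (state k) (state l) = Hpair J1 J2 (\<lambda>i. of_int (spin k i)) (\<lambda>i. of_int (spin l i))"
    using assms by (intro Hpair_cong) (simp_all add: state_eq_spin)
  also have "\<dots> = - (J1 * of_int (fst (bond_counts k l)) + J2 * of_int (snd (bond_counts k l))) / 2"
    unfolding Hpair_eq_bonds bond_counts_def of_int_nn_bonds of_int_nnn_bonds by simp
  finally have H: "- Hpair J1 J2 (state k) (state l)
      = (J1 * of_int (fst (bond_counts k l)) + J2 * of_int (snd (bond_counts k l))) / 2"
    by simp
  show ?thesis unfolding theta_def H by (simp add: divide_divide_eq_left mult.assoc)
qed

lemma sum_theta_eq_if_bond_counts_eq:
  assumes "k \<in> {1..16}" "k' \<in> {1..16}" "G \<subseteq> {1..16}"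
    and "image_mset (bond_counts k) (mset_set G) = image_mset (bond_counts k') (mset_set G)"
  shows "(\<Sum>l\<in>G. theta kB J1 J2 T k l) = (\<Sum>l\<in>G. theta kB J1 J2 T k' l)"
proof -
  define E where "E p = exp ((J1 * of_int (fst p) + J2 * of_int (snd p)) / (2 * kB * T))" for p :: "int \<times> int"
  have "(\<Sum>l\<in>G. theta kB J1 J2 T k l) = sum_mset (image_mset E (image_mset (bond_counts k) (mset_set G)))"
    if "k \<in> {1..16}" for k
  proof -
    have "(\<Sum>l\<in>G. theta kB J1 J2 T k l) = (\<Sum>l\<in>G. E (bond_counts k l))"
      using that assms(3) by (intro sum.cong) (auto simp: E_def theta_eq_bond_counts)
    then show ?thesis by (simp add: sum_unfold_sum_mset image_mset.compositionality comp_def)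
  qed
  then show ?thesis using assms by simp
qed

lemma lessThan_4_eq: "{..<4::nat} = {0, 1, 2, 3}" by auto
lemma lessThan_3_eq: "{..<3::nat} = {0, 1, 2}" by auto

lemma groups_tau_partition:
  "disjoint_family_on (nth groups_tau) {..<4}" "(\<Union>j<4. groups_tau ! j) = {1..16}"
proof -
  show "disjoint_family_on (nth groups_tau) {..<4}"
    by (simp add: disjoint_family_on_def lessThan_4_eq groups_tau_def)
  have "(\<Union>j\<in>set [0..<4]. groups_tau ! j) = set [1..<17]" by code_simp
  moreover have "{1..<17::nat} = {1..16}" by auto
  ultimately show "(\<Union>j<4. groups_tau ! j) = {1..16}" by (simp add: atLeast0LessThan)
qed

lemma groups_tau'_partition:
  "disjoint_family_on (nth groups_tau') {..<3}" "(\<Union>j<3. groups_tau' ! j) = {1, 2, 3, 5, 6, 9, 11}"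
  by (simp_all add: disjoint_family_on_def lessThan_3_eq groups_tau'_def insert_commute)

text \<open>The groups \<open>G\<^sub>j\<close> are the orbits of the symmetries of the square (together with the global
  spin flip, for \<open>\<tau>\<close>). All that is needed is that every state of a group has the same multiset
  of bond counts towards each group, which is checked by evaluation.\<close>

lemma bond_counts_equitable_tau:
  "\<forall>k\<in>set [1..<17]. \<forall>i\<in>set [0..<4]. k \<in> groups_tau ! i \<longrightarrow> (\<forall>j\<in>set [0..<4].
    image_mset (bond_counts k) (mset_set (groups_tau ! j))
      = image_mset (bond_counts (rows_tau ! i)) (mset_set (groups_tau ! j)))"
  unfolding bond_counts_def spin_def layer_spins_def by code_simp

lemma bond_counts_equitable_tau':
  "\<forall>k\<in>set [1..<17]. \<forall>i\<in>set [0..<3]. k \<in> groups_tau' ! i \<longrightarrow> (\<forall>j\<in>set [0..<3].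
    image_mset (bond_counts k) (mset_set (groups_tau' ! j))
      = image_mset (bond_counts (rows_tau' ! i)) (mset_set (groups_tau' ! j)))"
  unfolding bond_counts_def spin_def layer_spins_def by code_simp

lemma tau_carrier: "tau kB J1 J2 T \<in> carrier_mat 4 4"
  by (simp add: tau_def)

lemma tau'_carrier: "tau' kB J1 J2 T \<in> carrier_mat 3 3"
  by (simp add: tau'_def)

lemma tau_row_sums:
  assumes "i < 4" "j < 4" "k \<in> groups_tau ! i"
  shows "(\<Sum>l\<in>groups_tau ! j. theta kB J1 J2 T k l) = tau kB J1 J2 T $$ (i, j)"
proof -
  have sub: "groups_tau ! j \<subseteq> {1..16}" and k: "k \<in> {1..16}"
    using groups_tau_partition(2) assms by auto
  have row: "rows_tau ! i \<in> {1..16}"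
    using assms(1) by (auto simp: rows_tau_def less_Suc_eq numeral_eq_Suc)
  have "k \<in> set [1..<17]" "i \<in> set [0..<4]" "j \<in> set [0..<4]" using k assms(1,2) by auto
  then have "image_mset (bond_counts k) (mset_set (groups_tau ! j))
      = image_mset (bond_counts (rows_tau ! i)) (mset_set (groups_tau ! j))"
    using bond_counts_equitable_tau assms(3) by blast
  then have "(\<Sum>l\<in>groups_tau ! j. theta kB J1 J2 T k l) = (\<Sum>l\<in>groups_tau ! j. theta kB J1 J2 T (rows_tau ! i) l)"
    by (rule sum_theta_eq_if_bond_counts_eq[OF k row sub])
  then show ?thesis by (simp add: tau_def assms(1,2))
qed

lemma tau'_row_sums:
  assumes "i < 3" "j < 3" "k \<in> groups_tau' ! i"
  shows "(\<Sum>l\<in>groups_tau' ! j. theta kB J1 J2 T k l) = tau' kB J1 J2 T $$ (i, j)"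
proof -
  have "groups_tau' ! j \<subseteq> {1, 2, 3, 5, 6, 9, 11}" "k \<in> {1, 2, 3, 5, 6, 9, 11}"
    using groups_tau'_partition(2) assms by blast+
  then have sub: "groups_tau' ! j \<subseteq> {1..16}" and k: "k \<in> {1..16}" by auto
  have row: "rows_tau' ! i \<in> {1..16}"
    using assms(1) by (auto simp: rows_tau'_def less_Suc_eq numeral_eq_Suc)
  have "k \<in> set [1..<17]" "i \<in> set [0..<3]" "j \<in> set [0..<3]" using k assms(1,2) by auto
  then have "image_mset (bond_counts k) (mset_set (groups_tau' ! j))
      = image_mset (bond_counts (rows_tau' ! i)) (mset_set (groups_tau' ! j))"
    using bond_counts_equitable_tau' assms(3) by blast
  then have "(\<Sum>l\<in>groups_tau' ! j. theta kB J1 J2 T k l) = (\<Sum>l\<in>groups_tau' ! j. theta kB J1 J2 T (rows_tau' ! i) l)"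
    by (rule sum_theta_eq_if_bond_counts_eq[OF k row sub])
  then show ?thesis by (simp add: tau'_def assms(1,2))
qed

lemma groups_tau_finite_nonempty: "j < 4 \<Longrightarrow> finite (groups_tau ! j) \<and> groups_tau ! j \<noteq> {}"
  by (auto simp flip: lessThan_iff simp: lessThan_4_eq groups_tau_def)

lemma tau_pos: "i < 4 \<Longrightarrow> j < 4 \<Longrightarrow> tau kB J1 J2 T $$ (i, j) > 0"
  using groups_tau_finite_nonempty[of j] by (simp add: tau_def theta_def sum_pos)

lemma groups_tau'_finite_nonempty: "j < 3 \<Longrightarrow> finite (groups_tau' ! j) \<and> groups_tau' ! j \<noteq> {}"
  by (auto simp flip: lessThan_iff simp: lessThan_3_eq groups_tau'_def)

lemma tau'_pos: "i < 3 \<Longrightarrow> j < 3 \<Longrightarrow> tau' kB J1 J2 T $$ (i, j) > 0"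
  using groups_tau'_finite_nonempty[of j] by (simp add: tau'_def theta_def sum_pos)

definition layer_states :: "(nat \<Rightarrow> real) set" where
  "layer_states = {..<4} \<rightarrow>\<^sub>E {-1, 1}"

definition nonperc_layer_states :: "(nat \<Rightarrow> real) set" where
  "nonperc_layer_states = {a \<in> layer_states. \<forall>r<4. \<not> (a r = -1 \<and> a ((r + 1) mod 4) = -1)}"

definition boltzmann_weight ::
    "real \<Rightarrow> real \<Rightarrow> real \<Rightarrow> real \<Rightarrow> (nat \<Rightarrow> real) \<Rightarrow> (nat \<Rightarrow> real) \<Rightarrow> real" where
  "boltzmann_weight kB J1 J2 T a b = exp (- Hpair J1 J2 a b / (kB * T))"

lemma configs_eq_PiE: "configs M = Pi\<^sub>E {..<M} (\<lambda>_. layer_states)"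
  by (simp add: configs_def layer_states_def)

lemma exp_Htot_eq_prod:
  "exp (- Htot J1 J2 M \<sigma> / (kB * T))
    = (\<Prod>m<M. boltzmann_weight kB J1 J2 T (\<sigma> m) (\<sigma> (Suc m mod M)))"
proof -
  have "Hpair J1 J2 (layer M \<sigma> m) (layer M \<sigma> (m + 1)) = Hpair J1 J2 (\<sigma> m) (\<sigma> (Suc m mod M))"
    if "m < M" for m
    using that by (intro Hpair_cong) (simp_all add: layer_def)
  then have "- Htot J1 J2 M \<sigma> / (kB * T) = (\<Sum>m<M. - Hpair J1 J2 (\<sigma> m) (\<sigma> (Suc m mod M)) / (kB * T))"
    unfolding Htot_def by (simp add: sum_negf sum_divide_distrib)
  then show ?thesis by (simp add: exp_sum boltzmann_weight_def)
qed

lemma Zpart_eq_cyclic_transfer_sum: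
  "Zpart kB J1 J2 M T = cyclic_transfer_sum layer_states (boltzmann_weight kB J1 J2 T) M"
  unfolding Zpart_def cyclic_transfer_sum_def configs_eq_PiE[symmetric]
  by (intro sum.cong refl exp_Htot_eq_prod)

lemma nonperc_configs_eq_PiE:
  "{\<sigma> \<in> configs M. nonperc M \<sigma>} = Pi\<^sub>E {..<M} (\<lambda>_. nonperc_layer_states)"
proof -
  have "nonperc M \<sigma> \<longleftrightarrow> (\<forall>m<M. \<sigma> m \<in> nonperc_layer_states)" if "\<sigma> \<in> configs M" for \<sigma>
    using that by (auto simp: nonperc_def layer_def nonperc_layer_states_def configs_eq_PiE)
  then have "{\<sigma> \<in> configs M. nonperc M \<sigma>}
      = {\<sigma> \<in> Pi\<^sub>E {..<M} (\<lambda>_. layer_states). \<forall>m<M. \<sigma> m \<in> nonperc_layer_states}"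
    by (auto simp: configs_eq_PiE)
  also have "\<dots> = Pi\<^sub>E {..<M} (\<lambda>_. nonperc_layer_states)"
    by (auto simp: PiE_iff nonperc_layer_states_def extensional_def)
  finally show ?thesis .
qed

lemma Zpart'_eq_cyclic_transfer_sum:
  "Zpart' kB J1 J2 M T = cyclic_transfer_sum nonperc_layer_states (boltzmann_weight kB J1 J2 T) M"
  unfolding Zpart'_def cyclic_transfer_sum_def nonperc_configs_eq_PiE
  by (intro sum.cong refl exp_Htot_eq_prod)

definition layer_state :: "nat \<Rightarrow> nat \<Rightarrow> real" where
  "layer_state k = restrict (state k) {..<4}"

lemma theta_eq_boltzmann_weight:
  "theta kB J1 J2 T k l = boltzmann_weight kB J1 J2 T (layer_state k) (layer_state l)"
proof -
  have "Hpair J1 J2 (state k) (state l) = Hpair J1 J2 (layer_state k) (layer_state l)"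
    by (rule Hpair_cong) (simp_all add: layer_state_def)
  then show ?thesis by (simp add: theta_def boltzmann_weight_def)
qed

lemma bij_betw_layer_state: "bij_betw layer_state {1..16} layer_states"
proof -
  have "state k i \<in> {-1, 1}" for k i
    unfolding state_def by (cases "((k - 1) div 2 ^ (i mod 4)) mod 2 = 0") auto
  then have "layer_state k \<in> layer_states" for k
    unfolding layer_state_def layer_states_def restrict_PiE_iff by blast
  then have into: "layer_state ` {1..16} \<subseteq> layer_states" by blast
  have "distinct layer_spins" "\<forall>xs\<in>set layer_spins. length xs = 4" "length layer_spins = 16"
    unfolding layer_spins_def by code_simp+
  then have inj: "inj_on layer_state {1..16}"
  proof (intro inj_onI)
    fix k l assume kl: "k \<in> {1..16}" "l \<in> {1..16}" "layer_state k = layer_state l"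
    have "spin k i = spin l i" if "i < 4" for i
      using fun_cong[OF kl(3), of i] that kl(1,2) by (simp add: layer_state_def state_eq_spin)
    then have "layer_spins ! (k - 1) = layer_spins ! (l - 1)"
      using kl(1,2) \<open>\<forall>xs\<in>set layer_spins. length xs = 4\<close> \<open>length layer_spins = 16\<close>
      by (intro nth_equalityI) (auto simp: spin_def)
    then show "k = l"
      using nth_eq_iff_index_eq[OF \<open>distinct layer_spins\<close>] kl(1,2) \<open>length layer_spins = 16\<close> by force
  qed
  have "card layer_states = 16" by (simp add: layer_states_def card_PiE numeral_2_eq_2[symmetric])
  then have "layer_state ` {1..16} = layer_states"
    using card_image[OF inj] into by (intro card_subset_eq) (auto simp: layer_states_def finite_PiE)
  with inj show ?thesis by (simp add: bij_betw_def)
qed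

lemma layer_state_nonperc_iff:
  assumes "k \<in> {1..16}"
  shows "layer_state k \<in> nonperc_layer_states \<longleftrightarrow> k \<in> {1, 2, 3, 5, 6, 9, 11}"
proof -
  have "\<forall>k\<in>set [1..<17].
      (k \<in> {1, 2, 3, 5, 6, 9, 11}) = (\<forall>r\<in>set [0..<4]. \<not> (spin k r = -1 \<and> spin k ((r + 1) mod 4) = -1))"
    unfolding spin_def layer_spins_def by code_simp
  moreover have "layer_state k \<in> layer_states" using bij_betw_layer_state assms by (auto simp: bij_betw_def)
  moreover have "of_int (spin k r) = (-1::real) \<longleftrightarrow> spin k r = -1" for r
    by (metis of_int_eq_iff of_int_minus of_int_1)
  ultimately show ?thesis
    using assms by (auto simp: nonperc_layer_states_def layer_state_def state_eq_spin)
qed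

lemma image_layer_state_nonperc: "layer_state ` {1, 2, 3, 5, 6, 9, 11} = nonperc_layer_states"
proof -
  have "nonperc_layer_states = {a \<in> layer_state ` {1..16}. a \<in> nonperc_layer_states}"
    using bij_betw_layer_state by (auto simp: bij_betw_def nonperc_layer_states_def)
  also have "\<dots> = layer_state ` {k \<in> {1..16}. layer_state k \<in> nonperc_layer_states}" by auto
  also have "{k \<in> {1..16}. layer_state k \<in> nonperc_layer_states} = {1, 2, 3, 5, 6, 9, 11}"
    using layer_state_nonperc_iff by auto
  finally show ?thesis by simp
qed

text \<open>Lumping the layer states into the groups \<open>G\<^sub>j\<close> turns the Perron vector of the group
  matrix \<open>Q\<close> into a positive eigenvector of the full transfer matrix.\<close>

lemma ln_cyclic_transfer_sum_tendsto_block_matrix: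
  fixes Q :: "real mat" and G :: "nat \<Rightarrow> nat set"
  assumes Q: "Q \<in> carrier_mat n n" "CARD('n::finite) = n" "n > 0"
    and Q_pos: "\<And>i j. i < n \<Longrightarrow> j < n \<Longrightarrow> Q $$ (i, j) > 0"
    and G: "\<And>j. j < n \<Longrightarrow> finite (G j)" "disjoint_family_on G {..<n}"
    and rows: "\<And>i j k. i < n \<Longrightarrow> j < n \<Longrightarrow> k \<in> G i \<Longrightarrow> (\<Sum>l\<in>G j. theta kB J1 J2 T k l) = Q $$ (i, j)"
    and K: "(\<Union>j<n. G j) = K" "K \<subseteq> {1..16}" "K \<noteq> {}"
  shows "(\<lambda>M. ln (cyclic_transfer_sum (layer_state ` K) (boltzmann_weight kB J1 J2 T) M) / real M)
    \<longlonglongrightarrow> ln (max_real_root Q)"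
proof -
  obtain w where w_pos: "\<forall>i<n. w i > 0"
    and eig: "\<forall>i<n. (\<Sum>j<n. Q $$ (i, j) * w j) = max_real_root Q * w i"
    using perron_root_of_positive_mat(2)[OF Q Q_pos] by blast
  have "\<exists>v. (\<forall>k\<in>(\<Union>j<n. G j). v k > 0) \<and>
      (\<forall>k\<in>(\<Union>j<n. G j). (\<Sum>l\<in>(\<Union>j<n. G j). theta kB J1 J2 T k l * v l) = max_real_root Q * v k)"
    by (rule equitable_partition_lifts_eigenvector[where Q = "\<lambda>i j. Q $$ (i, j)" and w = w])
      (use G rows w_pos eig in auto)
  then obtain v where "\<forall>k\<in>K. v k > 0" "\<forall>k\<in>K. (\<Sum>l\<in>K. theta kB J1 J2 T k l * v l) = max_real_root Q * v k"
    unfolding K(1) by blast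
  moreover have "bij_betw layer_state K (layer_state ` K)"
    using inj_on_subset[OF _ K(2)] bij_betw_layer_state by (auto simp: bij_betw_def)
  ultimately have "\<exists>u. (\<forall>a\<in>layer_state ` K. u a > 0) \<and> (\<forall>a\<in>layer_state ` K.
      (\<Sum>b\<in>layer_state ` K. boltzmann_weight kB J1 J2 T a b * u b) = max_real_root Q * u a)"
    by (intro positive_eigenvector_bij_betw[where V = "theta kB J1 J2 T"])
      (simp_all add: theta_eq_boltzmann_weight)
  then obtain u where u: "\<forall>a\<in>layer_state ` K. u a > 0"
    "\<forall>a\<in>layer_state ` K. (\<Sum>b\<in>layer_state ` K. boltzmann_weight kB J1 J2 T a b * u b) = max_real_root Q * u a"
    by blast
  show ?thesis
    using K(2,3) u perron_root_of_positive_mat(1)[OF Q Q_pos] finite_subset[OF K(2)]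
    by (intro ln_cyclic_transfer_sum_tendsto[where v = u]) (auto simp: boltzmann_weight_def)
qed

lemma lam_max_pos: "lam_max kB J1 J2 T > 0"
  unfolding lam_max_def by (rule perron_root_of_positive_mat(1)[where 'n = 4, OF tau_carrier _ _ tau_pos]) auto

lemma mu_max_pos: "mu_max kB J1 J2 T > 0"
  unfolding mu_max_def by (rule perron_root_of_positive_mat(1)[where 'n = 3, OF tau'_carrier _ _ tau'_pos]) auto

lemma ln_Zpart_tendsto: "(\<lambda>M. ln (Zpart kB J1 J2 M T) / real M) \<longlonglongrightarrow> ln (lam_max kB J1 J2 T)"
proof -
  have "(\<lambda>M. ln (cyclic_transfer_sum (layer_state ` {1..16}) (boltzmann_weight kB J1 J2 T) M) / real M)
      \<longlonglongrightarrow> ln (max_real_root (tau kB J1 J2 T))"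
  proof (rule ln_cyclic_transfer_sum_tendsto_block_matrix[where 'n = 4 and G = "nth groups_tau"])
    show "tau kB J1 J2 T \<in> carrier_mat 4 4" by (rule tau_carrier)
    show "(\<Union>j<4. groups_tau ! j) = {1..16}" by (rule groups_tau_partition(2))
    show "finite (groups_tau ! j)" if "j < 4" for j using groups_tau_finite_nonempty[OF that] by simp
  qed (simp_all add: groups_tau_partition(1) tau_pos tau_row_sums)
  then show ?thesis
    unfolding bij_betw_imp_surj_on[OF bij_betw_layer_state] Zpart_eq_cyclic_transfer_sum lam_max_def .
qed

lemma ln_Zpart'_tendsto: "(\<lambda>M. ln (Zpart' kB J1 J2 M T) / real M) \<longlonglongrightarrow> ln (mu_max kB J1 J2 T)"
proof -
  have "(\<lambda>M. ln (cyclic_transfer_sum (layer_state ` {1, 2, 3, 5, 6, 9, 11}) (boltzmann_weight kB J1 J2 T) M)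
      / real M) \<longlonglongrightarrow> ln (max_real_root (tau' kB J1 J2 T))"
  proof (rule ln_cyclic_transfer_sum_tendsto_block_matrix[where 'n = 3 and G = "nth groups_tau'"])
    show "tau' kB J1 J2 T \<in> carrier_mat 3 3" by (rule tau'_carrier)
    show "(\<Union>j<3. groups_tau' ! j) = {1, 2, 3, 5, 6, 9, 11}" by (rule groups_tau'_partition(2))
    show "finite (groups_tau' ! j)" if "j < 3" for j using groups_tau'_finite_nonempty[OF that] by simp
  qed (simp_all add: groups_tau'_partition(1) tau'_pos tau'_row_sums)
  then show ?thesis
    unfolding image_layer_state_nonperc Zpart'_eq_cyclic_transfer_sum mu_max_def .
qed

lemma free_energy_limit:
  "(\<lambda>M. ln (Zpart kB J1 J2 M T) / (4 * real M)) \<longlonglongrightarrow> ln (lam_max kB J1 J2 T) / 4"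
  using tendsto_divide[OF ln_Zpart_tendsto tendsto_const, of 4] by (simp add: field_simps)

lemma free_energy_eq: "free_energy kB J1 J2 T = - kB * T * (ln (lam_max kB J1 J2 T) / 4)"
  unfolding free_energy_def using limI[OF free_energy_limit] by simp

lemma ln_Zpart'_Zpart_ratio_tendsto:
  "(\<lambda>M. ln (Zpart' kB J1 J2 M T / Zpart kB J1 J2 M T) / real M)
    \<longlonglongrightarrow> ln (mu_max kB J1 J2 T / lam_max kB J1 J2 T)"
proof -
  have pos: "Zpart kB J1 J2 M T > 0" "Zpart' kB J1 J2 M T > 0" for M
    unfolding Zpart_eq_cyclic_transfer_sum Zpart'_eq_cyclic_transfer_sum
      image_layer_state_nonperc[symmetric] bij_betw_imp_surj_on[OF bij_betw_layer_state, symmetric]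
    by (auto intro!: cyclic_transfer_sum_pos simp: boltzmann_weight_def)
  have "ln (Zpart' kB J1 J2 M T / Zpart kB J1 J2 M T) / real M
      = ln (Zpart' kB J1 J2 M T) / real M - ln (Zpart kB J1 J2 M T) / real M" for M
    using pos[of M] by (subst ln_div) (simp_all add: diff_divide_distrib)
  moreover have "ln (mu_max kB J1 J2 T / lam_max kB J1 J2 T) = ln (mu_max kB J1 J2 T) - ln (lam_max kB J1 J2 T)"
    using mu_max_pos[of kB J1 J2 T] lam_max_pos[of kB J1 J2 T] by (simp add: ln_div)
  ultimately show ?thesis by (simp add: tendsto_diff ln_Zpart'_tendsto ln_Zpart_tendsto)
qed

lemma tau_entry_twice_differentiable:
  "twice_differentiable_on {0<..} (\<lambda>t. tau kB J1 J2 t $$ (i, j))" if "i < 4" "j < 4"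
proof -
  have "(\<lambda>t. tau kB J1 J2 t $$ (i, j))
      = (\<lambda>t. \<Sum>l\<in>groups_tau ! j. exp ((- Hpair J1 J2 (state (rows_tau ! i)) (state l) / kB) / t))"
    using that by (simp add: tau_def theta_def fun_eq_iff)
  then show ?thesis
    by (simp only:) (intro twice_differentiable_on_sum twice_differentiable_on_exp_divide, simp)
qed

lemma lam_max_twice_differentiable: "twice_differentiable_on {0<..} (lam_max kB J1 J2)"
proof (rule twice_differentiable_on_simple_root[where P = "\<lambda>t. char_poly (tau kB J1 J2 t)" and N = 4])
  show "degree (char_poly (tau kB J1 J2 t)) \<le> 4" for t
    using degree_monic_char_poly[OF tau_carrier] by simp
  show "twice_differentiable_on {0<..} (\<lambda>t. coeff (char_poly (tau kB J1 J2 t)) k)" for k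
    using tau_entry_twice_differentiable
    by (intro twice_differentiable_on_coeff_char_poly[OF tau_carrier]) auto
  have perron: "\<exists>w. (\<forall>i<4. w i > 0) \<and> (\<forall>i<4. (\<Sum>j<4. tau kB J1 J2 t $$ (i, j) * w j) = lam_max kB J1 J2 t * w i)"
    for t unfolding lam_max_def by (rule perron_root_of_positive_mat(2)[where 'n = 4, OF tau_carrier _ _ tau_pos]) auto
  have "isCont (lam_max kB J1 J2) t" if "t > 0" for t
  proof (rule perron_root_continuous[where A = "tau kB J1 J2" and n = 4])
    show "isCont (\<lambda>t. tau kB J1 J2 t $$ (i, j)) t" if "i < 4" "j < 4" for i j
      using twice_differentiable_onD[OF tau_entry_twice_differentiable[OF that]] \<open>t > 0\<close>
      by (simp add: differentiable_imp_continuous_within)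
  qed (use perron tau_pos in \<open>auto intro: less_imp_le\<close>)
  then show "continuous_on {0<..} (lam_max kB J1 J2)"
    by (intro continuous_at_imp_continuous_on) auto
  fix t
  obtain w where w: "\<forall>i<4. w i > 0" "\<forall>i<4. (\<Sum>j<4. tau kB J1 J2 t $$ (i, j) * w j) = lam_max kB J1 J2 t * w i"
    using perron[of t] by blast
  have "eigenvalue (tau kB J1 J2 t) (lam_max kB J1 J2 t)"
    by (rule eigenvalue_of_positive_eigenvector[OF tau_carrier, where w = w]) (use w in auto)
  then show "poly (char_poly (tau kB J1 J2 t)) (lam_max kB J1 J2 t) = 0"
    using eigenvalue_root_char_poly[OF tau_carrier] by simp
  have "poly (pderiv (char_poly (tau kB J1 J2 t))) (lam_max kB J1 J2 t) > 0"
    by (rule poly_pderiv_char_poly_perron_root_pos[OF tau_carrier _ tau_pos, where w = w]) (use w in auto)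
  then show "poly (pderiv (char_poly (tau kB J1 J2 t))) (lam_max kB J1 J2 t) \<noteq> 0" by simp
qed simp

lemma ln_lam_max_twice_differentiable:
  "twice_differentiable_on {0<..} (\<lambda>t. ln (lam_max kB J1 J2 t) / 4)"
  using twice_differentiable_on_mult[OF twice_differentiable_on_ln[OF lam_max_twice_differentiable lam_max_pos]
      twice_differentiable_on_const[of _ "1 / 4"]]
  by simp

theorem theorem7:
  fixes kB J1 J2 T :: real
  assumes "kB > 0" and "T > 0"
  defines "L \<equiv> (\<lambda>t. ln (lam_max kB J1 J2 t) / 4)"
  shows "((\<lambda>M. ln (Zpart kB J1 J2 M T) / (4 * real M)) \<longlonglongrightarrow> L T)
    \<and> free_energy kB J1 J2 T = - (kB * T / 4) * ln (lam_max kB J1 J2 T)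
    \<and> L differentiable (at T)
    \<and> (\<lambda>t. free_energy kB J1 J2 t / t) differentiable (at T)
    \<and> internal_energy kB J1 J2 T = kB * T\<^sup>2 * deriv L T
    \<and> deriv L differentiable (at T)
    \<and> internal_energy kB J1 J2 differentiable (at T)
    \<and> heat_capacity kB J1 J2 T = 2 * kB * T * deriv L T + kB * T\<^sup>2 * deriv (deriv L) T
    \<and> ((\<lambda>M. ln (Zpart' kB J1 J2 M T / Zpart kB J1 J2 M T) / real M)
           \<longlonglongrightarrow> ln (mu_max kB J1 J2 T / lam_max kB J1 J2 T))"
proof -
  have L: "twice_differentiable_on {0<..} L"
    unfolding L_def by (rule ln_lam_max_twice_differentiable)
  have T: "T \<in> {0<..}" using \<open>T > 0\<close> by simp
  have "free_energy kB J1 J2 t = - kB * t * L t" for t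
    unfolding L_def by (rule free_energy_eq)
  note thermo = free_energy_derivatives[OF L open_greaterThan _ T this internal_energy_def]
  show ?thesis
    using thermo twice_differentiable_onD[OF L T] free_energy_limit ln_Zpart'_Zpart_ratio_tendsto
    by (auto simp: L_def heat_capacity_def free_energy_eq)
qed

end
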